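(* Let $A$ be a separable unital C*-algebra and let $\alpha\colon\mathbb{T}\to\mathrm{Aut}(A)$ be a continuous action of the circle group. Then $\alpha$ has the Rokhlin property if and only if for every finite subset $F\subseteq A$ and every $\varepsilon>0$ there is a unitary $u\in A$ such that $\|\alpha_\zeta(u)-\zeta u\|<\varepsilon$ for all $\zeta\in\mathbb T$ and $\|au-ua\|<\varepsilon$ for all $a\in F$.
   Context: For a unital C*-algebra $A$ with continuous action $\alpha$ of a second-countable compact group $G$: $A_\infty=\ell^\infty(\mathbb N,A)/c_0(\mathbb N,A)$ (quotient map $\kappa_A$, $A$ embedded as constant sequences, $A_\infty\cap A'$ the relative commutant); $\alpha^\infty$ is the coordinatewise action on $\ell^\infty(\mathbb N,A)$, $\ell^\infty_\alpha(\mathbb N,A)$ the set of sequences $a$ with $g\mapsto\alpha^\infty_g(a)$ norm continuous, $A_{\infty,\alpha}=\kappa_A(\ell^\infty_\alpha(\mathbb N,A))$ with induced action $\alpha_\infty$. $\mathtt{Lt}$ is left translation on $C(G)$. $\alpha$ has the Rokhlin property if there is a unital homomorphism $\varphi\colon C(G)\to A_{\infty,\alpha}\cap A'$ with $\varphi\circ\mathtt{Lt}_g=(\alpha_\infty)_g\circ\varphi$ for all $g\in G$. *)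

theory Defs
  imports "HOL-Analysis.Analysis"
begin

text \<open>A unital C*-algebra is modelled on a type of class real_normed_algebra_1 and banach
  (complete normed real algebra with unit of norm 1), together with a complex scalar
  multiplication sc extending the real one and an involution st satisfying the C*-identity.\<close>

definition cstar_alg :: "(complex \<Rightarrow> 'a::{real_normed_algebra_1,banach} \<Rightarrow> 'a) \<Rightarrow> ('a \<Rightarrow> 'a) \<Rightarrow> bool" where
  "cstar_alg sc st \<longleftrightarrow>
     (\<forall>x. sc 1 x = x) \<and> (\<forall>c d x. sc (c * d) x = sc c (sc d x)) \<and>
     (\<forall>c x y. sc c (x + y) = sc c x + sc c y) \<and> (\<forall>c d x. sc (c + d) x = sc c x + sc d x) \<and>
     (\<forall>r x. sc (complex_of_real r) x = scaleR r x) \<and>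
     (\<forall>c x y. sc c (x * y) = sc c x * y \<and> sc c (x * y) = x * sc c y) \<and>
     (\<forall>c x. norm (sc c x) = cmod c * norm x) \<and>
     (\<forall>x. st (st x) = x) \<and> (\<forall>x y. st (x + y) = st x + st y) \<and>
     (\<forall>c x. st (sc c x) = sc (cnj c) (st x)) \<and> (\<forall>x y. st (x * y) = st y * st x) \<and>
     (\<forall>x. norm (st x * x) = (norm x)^2)"

definition separable_space :: "'a::metric_space itself \<Rightarrow> bool" where
  "separable_space _ \<longleftrightarrow> (\<exists>D::'a set. countable D \<and> closure D = UNIV)"

definition star_aut :: "(complex \<Rightarrow> 'a::{real_normed_algebra_1,banach} \<Rightarrow> 'a) \<Rightarrow> ('a \<Rightarrow> 'a) \<Rightarrow> ('a \<Rightarrow> 'a) \<Rightarrow> bool" where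
  "star_aut sc st f \<longleftrightarrow> bij f \<and> (\<forall>x y. f (x + y) = f x + f y) \<and> (\<forall>c x. f (sc c x) = sc c (f x)) \<and>
     (\<forall>x y. f (x * y) = f x * f y) \<and> f 1 = 1 \<and> (\<forall>x. f (st x) = st (f x))"

text \<open>Continuous action of the circle group T = sphere 0 1 (complex numbers of modulus 1).
  Only the values of alpha on the circle are relevant.\<close>
definition circle_action :: "(complex \<Rightarrow> 'a::{real_normed_algebra_1,banach} \<Rightarrow> 'a) \<Rightarrow> ('a \<Rightarrow> 'a) \<Rightarrow> (complex \<Rightarrow> 'a \<Rightarrow> 'a) \<Rightarrow> bool" where
  "circle_action sc st \<alpha> \<longleftrightarrow>
     (\<forall>\<zeta>\<in>sphere 0 1. star_aut sc st (\<alpha> \<zeta>)) \<and> \<alpha> 1 = id \<and>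
     (\<forall>\<zeta>\<in>sphere 0 1. \<forall>\<eta>\<in>sphere 0 1. \<alpha> (\<zeta> * \<eta>) = \<alpha> \<zeta> \<circ> \<alpha> \<eta>) \<and>
     (\<forall>a. continuous_on (sphere 0 1) (\<lambda>\<zeta>. \<alpha> \<zeta> a))"

definition bounded_seq :: "(nat \<Rightarrow> 'a::real_normed_vector) \<Rightarrow> bool" where
  "bounded_seq x \<longleftrightarrow> (\<exists>B. \<forall>n. norm (x n) \<le> B)"

definition null_seq :: "(nat \<Rightarrow> 'a::real_normed_vector) \<Rightarrow> bool" where
  "null_seq x \<longleftrightarrow> x \<longlonglongrightarrow> 0"

text \<open>x lies in l^infty_alpha: zeta \<mapsto> alpha^infty_zeta(x) is continuous for the sup norm.\<close>
definition alpha_cont_seq :: "(complex \<Rightarrow> 'a::real_normed_vector \<Rightarrow> 'a) \<Rightarrow> (nat \<Rightarrow> 'a) \<Rightarrow> bool" where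
  "alpha_cont_seq \<alpha> x \<longleftrightarrow>
     (\<forall>\<zeta>0\<in>sphere 0 1. \<forall>e>0. \<exists>d>0. \<forall>\<zeta>\<in>sphere 0 1. cmod (\<zeta> - \<zeta>0) < d \<longrightarrow>
        (\<forall>n. norm (\<alpha> \<zeta> (x n) - \<alpha> \<zeta>0 (x n)) \<le> e))"

text \<open>Rokhlin property for a circle action, unfolded: a unital *-homomorphism
  phi : C(T) \<rightarrow> A_{\<infinity>,\<alpha>} \<inter> A' with phi \<circ> Lt_\<zeta> = (\<alpha>_\<infinity>)_\<zeta> \<circ> phi is given through a choice of
  representatives Phi f \<in> l^\<infinity>_\<alpha>(N,A) of phi(f) (so phi f = \<kappa>_A(Phi f)); all identities in
  A_\<infinity> become "difference is a null sequence". C(T) consists of the functions continuous on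
  the circle, identified when they agree on the circle. Lt_\<zeta> f (z) = f(\<zeta>^{-1} z).\<close>
definition rokhlin_circle :: "(complex \<Rightarrow> 'a::{real_normed_algebra_1,banach} \<Rightarrow> 'a) \<Rightarrow> ('a \<Rightarrow> 'a) \<Rightarrow> (complex \<Rightarrow> 'a \<Rightarrow> 'a) \<Rightarrow> bool" where
  "rokhlin_circle sc st \<alpha> \<longleftrightarrow>
    (\<exists>\<Phi> :: (complex \<Rightarrow> complex) \<Rightarrow> nat \<Rightarrow> 'a.
      let CT = {f. continuous_on (sphere 0 1) f} in
      (\<forall>f\<in>CT. bounded_seq (\<Phi> f) \<and> alpha_cont_seq \<alpha> (\<Phi> f)) \<and>
      (\<forall>f\<in>CT. \<forall>g\<in>CT. (\<forall>z\<in>sphere 0 1. f z = g z) \<longrightarrow> null_seq (\<lambda>n. \<Phi> f n - \<Phi> g n)) \<and>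
      (\<forall>f\<in>CT. \<forall>g\<in>CT. null_seq (\<lambda>n. \<Phi> (\<lambda>z. f z + g z) n - \<Phi> f n - \<Phi> g n)) \<and>
      (\<forall>f\<in>CT. \<forall>c. null_seq (\<lambda>n. \<Phi> (\<lambda>z. c * f z) n - sc c (\<Phi> f n))) \<and>
      (\<forall>f\<in>CT. \<forall>g\<in>CT. null_seq (\<lambda>n. \<Phi> (\<lambda>z. f z * g z) n - \<Phi> f n * \<Phi> g n)) \<and>
      (\<forall>f\<in>CT. null_seq (\<lambda>n. \<Phi> (\<lambda>z. cnj (f z)) n - st (\<Phi> f n))) \<and>
      null_seq (\<lambda>n. \<Phi> (\<lambda>z. 1) n - 1) \<and>
      (\<forall>f\<in>CT. \<forall>a. null_seq (\<lambda>n. \<Phi> f n * a - a * \<Phi> f n)) \<and>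
      (\<forall>f\<in>CT. \<forall>\<zeta>\<in>sphere 0 1. null_seq (\<lambda>n. \<alpha> \<zeta> (\<Phi> f n) - \<Phi> (\<lambda>z. f (cnj \<zeta> * z)) n)))"

definition unitary_el :: "('a::ring_1 \<Rightarrow> 'a) \<Rightarrow> 'a \<Rightarrow> bool" where
  "unitary_el st u \<longleftrightarrow> st u * u = 1 \<and> u * st u = 1"

end

theory Submission
  imports Defs "HOL-Complex_Analysis.Cauchy_Integral_Formula"
begin

(* Forward direction: the Rokhlin map sends z |-> conj z to a bounded sequence x_n that is
   asymptotically unitary and central, with alpha_zeta(x_n) - zeta x_n -> 0 for every zeta; since
   x lies in l^infty_alpha, this convergence is equicontinuous in zeta, hence uniform on the
   compact circle.  The unitaries x_n (x_n^* x_n)^(-1/2), with the inverse square root given by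
   the binomial series, differ from x_n by o(1).

   Converse: pick unitaries u_n commuting up to (n+1)^-3 with the first n terms of a dense
   sequence and with alpha_zeta(u_n) within (n+1)^-3 of zeta u_n, and send f in C(T) to the
   sequence of values f_n(v_n) at the adjoints v_n of the u_n, where f_n is a near-best Laurent
   polynomial approximation of f with exponents in [-n, 2n].  For a unitary w,
   ||L(w)|| <= sup_T |L| follows from the C*-identity, because ||P(w)^(2^m)|| = ||P(w)||^(2^m)
   while Cauchy's inequality bounds the coefficients of P^(2^m) by (sup_T |P|)^(2^m).  Both
   w |-> L(w) and a |-> [L(w), a] then have Lipschitz constants O(deg^2 sup_T |L|), and these
   O(n^2) factors are absorbed by the errors (n+1)^-3. *)

section \<open>Unital C*-algebras\<close>

locale unital_cstar =
  fixes sc :: "complex \<Rightarrow> 'a::{real_normed_algebra_1,banach} \<Rightarrow> 'a"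
    and st :: "'a \<Rightarrow> 'a"
  assumes cstar: "cstar_alg sc st"
begin

lemma sc_one [simp]: "sc 1 x = x" using cstar by (simp add: cstar_alg_def)
lemma sc_sc [simp]: "sc c (sc d x) = sc (c * d) x" using cstar by (simp add: cstar_alg_def)
lemma sc_add: "sc c (x + y) = sc c x + sc c y" using cstar by (simp add: cstar_alg_def)
lemma sc_add_left: "sc (c + d) x = sc c x + sc d x" using cstar by (simp add: cstar_alg_def)
lemma sc_of_real: "sc (complex_of_real r) x = r *\<^sub>R x" using cstar by (simp add: cstar_alg_def)
lemma sc_mult_left: "sc c x * y = sc c (x * y)" using cstar by (simp add: cstar_alg_def)
lemma sc_mult_right: "x * sc c y = sc c (x * y)" using cstar unfolding cstar_alg_def by metis
lemma norm_sc: "norm (sc c x) = cmod c * norm x" using cstar by (simp add: cstar_alg_def)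
lemma st_st [simp]: "st (st x) = x" using cstar by (simp add: cstar_alg_def)
lemma st_add: "st (x + y) = st x + st y" using cstar by (simp add: cstar_alg_def)
lemma st_sc: "st (sc c x) = sc (cnj c) (st x)" using cstar by (simp add: cstar_alg_def)
lemma st_mult: "st (x * y) = st y * st x" using cstar by (simp add: cstar_alg_def)
lemma norm_st_mult_self: "norm (st x * x) = (norm x)\<^sup>2" using cstar by (simp add: cstar_alg_def)

lemma sc_zero_left [simp]: "sc 0 x = 0"
  using sc_of_real[of 0 x] by simp

lemma sc_zero_right [simp]: "sc c 0 = 0"
  using sc_add[of c 0 0] by simp

lemma sc_minus_right: "sc c (- x) = - sc c x"
  using sc_add[of c x "- x"] by (simp add: add_eq_0_iff)

lemma sc_diff: "sc c (x - y) = sc c x - sc c y"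
  by (metis diff_conv_add_uminus sc_add sc_minus_right)

lemma sc_minus_left: "sc (- c) x = - sc c x"
  using sc_add_left[of c "- c" x] by (simp add: add_eq_0_iff)

lemma sc_diff_left: "sc (c - d) x = sc c x - sc d x"
  by (metis diff_conv_add_uminus sc_add_left sc_minus_left)

lemma sc_sum: "sc c (sum f A) = (\<Sum>i\<in>A. sc c (f i))"
  by (induction A rule: infinite_finite_induct) (auto simp: sc_add)

lemma sc_power: "sc c x ^ n = sc (c ^ n) (x ^ n)"
  by (induction n) (simp_all add: sc_mult_left sc_mult_right mult.commute)

lemma st_0 [simp]: "st 0 = 0"
  using st_add[of 0 0] by simp

lemma st_minus: "st (- x) = - st x"
  using st_add[of x "- x"] by (simp add: add_eq_0_iff)

lemma st_diff: "st (x - y) = st x - st y"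
  by (metis diff_conv_add_uminus st_add st_minus)

lemma st_1 [simp]: "st 1 = 1"
  using st_mult[of "st 1" 1] by simp

lemma st_scaleR: "st (r *\<^sub>R x) = r *\<^sub>R st x"
  using st_sc[of "complex_of_real r" x] by (simp add: sc_of_real)

lemma st_sum: "st (sum f A) = (\<Sum>i\<in>A. st (f i))"
  by (induction A rule: infinite_finite_induct) (auto simp: st_add)

lemma st_power: "st (x ^ n) = st x ^ n"
  by (induction n) (simp_all add: st_mult power_commutes)

lemma norm_st [simp]: "norm (st x) = norm x"
proof -
  have le: "norm y \<le> norm (st y)" for y
  proof (cases "y = 0")
    case False
    have "(norm y)\<^sup>2 \<le> norm (st y) * norm y"
      using norm_st_mult_self[of y] norm_mult_ineq[of "st y" y] by simp
    then show ?thesis using False by (simp add: power2_eq_square)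
  qed simp
  show ?thesis using le[of x] le[of "st x"] by simp
qed

lemma bounded_linear_st: "bounded_linear st"
  by (rule bounded_linear_intro[where K=1]) (auto simp: st_add st_scaleR)

abbreviation unitary :: "'a \<Rightarrow> bool" where
  "unitary \<equiv> unitary_el st"

lemma norm_unitary: "unitary u \<Longrightarrow> norm u = 1"
  using norm_st_mult_self[of u] norm_ge_zero[of u]
  by (simp add: unitary_el_def power2_eq_1_iff)

lemma unitary_st: "unitary u \<Longrightarrow> unitary (st u)"
  by (simp add: unitary_el_def)

lemma unitary_sc: "cmod c = 1 \<Longrightarrow> unitary w \<Longrightarrow> unitary (sc c w)"
  using complex_norm_square[of c]
  by (simp add: unitary_el_def st_sc sc_mult_left sc_mult_right mult.commute)

end


section \<open>The binomial series of $(1 - y)^{-1/2}$\<close>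

definition inv_sqrt_coeff :: "nat \<Rightarrow> real" where
  "inv_sqrt_coeff k = pochhammer (1/2) k / fact k"

lemma inv_sqrt_coeff_gchoose: "inv_sqrt_coeff k = (-1) ^ k * ((-1/2) gchoose k)"
  by (simp add: inv_sqrt_coeff_def gbinomial_pochhammer)

lemma inv_sqrt_coeff_nonneg: "inv_sqrt_coeff k \<ge> 0"
  unfolding inv_sqrt_coeff_def by (intro divide_nonneg_pos pochhammer_nonneg) auto

lemma inv_sqrt_coeff_0 [simp]: "inv_sqrt_coeff 0 = 1"
  by (simp add: inv_sqrt_coeff_def)

text \<open>Vandermonde's identity; it makes the square of the binomial series the Neumann series of
  $(1 - y)^{-1}$.\<close>
lemma inv_sqrt_coeff_convolution: "(\<Sum>i\<le>k. inv_sqrt_coeff i * inv_sqrt_coeff (k - i)) = 1"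
proof -
  have "(\<Sum>i\<le>k. inv_sqrt_coeff i * inv_sqrt_coeff (k - i)) =
      (\<Sum>i\<le>k. (-1) ^ k * (((-1/2::real) gchoose i) * ((-1/2) gchoose (k - i))))"
  proof (rule sum.cong)
    fix i assume "i \<in> {..k}"
    then have "(-1::real) ^ i * (-1) ^ (k - i) = (-1) ^ k"
      by (metis le_add_diff_inverse atMost_iff power_add)
    then show "inv_sqrt_coeff i * inv_sqrt_coeff (k - i) =
        (-1) ^ k * (((-1/2::real) gchoose i) * ((-1/2) gchoose (k - i)))"
      unfolding inv_sqrt_coeff_gchoose by (metis (no_types, lifting) mult.assoc mult.left_commute)
  qed simp
  also have "\<dots> = (-1) ^ k * (\<Sum>i\<le>k. ((-1/2::real) gchoose i) * ((-1/2) gchoose (k - i)))"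
    by (simp add: sum_distrib_left)
  also have "(\<Sum>i\<le>k. ((-1/2::real) gchoose i) * ((-1/2) gchoose (k - i))) = (-1::real) gchoose k"
    using gbinomial_Vandermonde[of "-1/2::real" "-1/2" k] by (simp add: atLeast0AtMost)
  also have "(-1::real) gchoose k = (-1) ^ k"
    using gbinomial_minus[of "1::real" k] by (simp add: binomial_gbinomial[symmetric])
  finally show ?thesis by (simp flip: power_add add: power_even_eq[symmetric] mult_2[symmetric])
qed

lemma inv_sqrt_coeff_le_1: "inv_sqrt_coeff k \<le> 1"
proof (cases k)
  case (Suc m)
  have "(\<Sum>i\<in>{0, k}. inv_sqrt_coeff i * inv_sqrt_coeff (k - i)) \<le>
      (\<Sum>i\<le>k. inv_sqrt_coeff i * inv_sqrt_coeff (k - i))"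
    by (rule sum_mono2) (auto intro: mult_nonneg_nonneg inv_sqrt_coeff_nonneg)
  then show ?thesis
    using Suc inv_sqrt_coeff_convolution[of k] inv_sqrt_coeff_nonneg[of k] by simp
qed simp

lemma neumann_series:
  fixes y :: "'a::{real_normed_algebra_1,banach}"
  assumes "norm y < 1"
  shows "(\<Sum>k. y ^ k) * (1 - y) = 1" and "(1 - y) * (\<Sum>k. y ^ k) = 1"
proof -
  have partial: "(\<Sum>k<n. y ^ k) * (1 - y) = 1 - y ^ n" "(1 - y) * (\<Sum>k<n. y ^ k) = 1 - y ^ n" for n
  proof (induction n)
    case (Suc n)
    have "(\<Sum>k<Suc n. y ^ k) * (1 - y) = (1 - y ^ n) + y ^ n * (1 - y)"
      and "(1 - y) * (\<Sum>k<Suc n. y ^ k) = (1 - y ^ n) + (1 - y) * y ^ n"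
      by (simp_all add: distrib_right distrib_left Suc.IH)
    then show "(\<Sum>k<Suc n. y ^ k) * (1 - y) = 1 - y ^ Suc n"
      and "(1 - y) * (\<Sum>k<Suc n. y ^ k) = 1 - y ^ Suc n"
      by (simp_all add: right_diff_distrib left_diff_distrib power_commutes)
  qed simp_all
  have "summable (\<lambda>k. y ^ k)"
    by (rule summable_comparison_test[OF _ summable_geometric[of "norm y"]])
      (use assms in \<open>auto intro: norm_power_ineq\<close>)
  then have S: "(\<lambda>n. \<Sum>k<n. y ^ k) \<longlonglongrightarrow> (\<Sum>k. y ^ k)"
    by (rule summable_LIMSEQ)
  have "(\<lambda>n. (\<Sum>k<n. y ^ k) * (1 - y)) \<longlonglongrightarrow> (\<Sum>k. y ^ k) * (1 - y)"
    and "(\<lambda>n. (1 - y) * (\<Sum>k<n. y ^ k)) \<longlonglongrightarrow> (1 - y) * (\<Sum>k. y ^ k)"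
    using tendsto_mult_left[OF S] tendsto_mult_right[OF S] by auto
  moreover have "(\<lambda>n. 1 - y ^ n) \<longlonglongrightarrow> 1 - 0"
    by (intro tendsto_intros LIMSEQ_power_zero assms)
  ultimately show "(\<Sum>k. y ^ k) * (1 - y) = 1" and "(1 - y) * (\<Sum>k. y ^ k) = 1"
    unfolding partial by (auto intro: LIMSEQ_unique)
qed

definition inv_sqrt_series :: "'a::{real_normed_algebra_1,banach} \<Rightarrow> 'a" where
  "inv_sqrt_series y = (\<Sum>k. inv_sqrt_coeff k *\<^sub>R y ^ k)"

lemma norm_inv_sqrt_term_le:
  fixes y :: "'a::real_normed_algebra_1"
  shows "norm (inv_sqrt_coeff k *\<^sub>R y ^ k) \<le> norm y ^ k"
proof -
  have "norm (inv_sqrt_coeff k *\<^sub>R y ^ k) = inv_sqrt_coeff k * norm (y ^ k)"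
    using inv_sqrt_coeff_nonneg[of k] by simp
  also have "\<dots> \<le> 1 * norm y ^ k"
    by (intro mult_mono inv_sqrt_coeff_le_1 norm_power_ineq) auto
  finally show ?thesis by simp
qed

lemma summable_norm_inv_sqrt_terms:
  fixes y :: "'a::{real_normed_algebra_1,banach}"
  assumes "norm y < 1"
  shows "summable (\<lambda>k. norm (inv_sqrt_coeff k *\<^sub>R y ^ k))"
  by (rule summable_comparison_test[OF _ summable_geometric[of "norm y"]])
    (use assms norm_inv_sqrt_term_le in auto)

lemma inv_sqrt_series_square:
  fixes y :: "'a::{real_normed_algebra_1,banach}"
  assumes y: "norm y < 1"
  shows "inv_sqrt_series y * inv_sqrt_series y * (1 - y) = 1"
proof -
  have "inv_sqrt_series y * inv_sqrt_series y =
      (\<Sum>k. \<Sum>i\<le>k. (inv_sqrt_coeff i *\<^sub>R y ^ i) * (inv_sqrt_coeff (k - i) *\<^sub>R y ^ (k - i)))"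
    unfolding inv_sqrt_series_def
    by (rule Cauchy_product[OF summable_norm_inv_sqrt_terms[OF y] summable_norm_inv_sqrt_terms[OF y]])
  also have "\<dots> = (\<Sum>k. (\<Sum>i\<le>k. inv_sqrt_coeff i * inv_sqrt_coeff (k - i)) *\<^sub>R y ^ k)"
    by (simp add: scaleR_sum_left power_add[symmetric] mult.commute)
  finally show ?thesis by (simp add: inv_sqrt_coeff_convolution neumann_series(1)[OF y])
qed

lemma inv_sqrt_series_commute:
  fixes y :: "'a::{real_normed_algebra_1,banach}"
  assumes y: "norm y < 1" and zy: "z * y = y * z"
  shows "z * inv_sqrt_series y = inv_sqrt_series y * z"
proof -
  have s: "summable (\<lambda>k. inv_sqrt_coeff k *\<^sub>R y ^ k)"
    by (rule summable_norm_cancel[OF summable_norm_inv_sqrt_terms[OF y]])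
  have "z * inv_sqrt_series y = (\<Sum>k. z * (inv_sqrt_coeff k *\<^sub>R y ^ k))"
    unfolding inv_sqrt_series_def by (rule suminf_mult[OF s, symmetric])
  also have "\<dots> = (\<Sum>k. (inv_sqrt_coeff k *\<^sub>R y ^ k) * z)"
    by (simp add: power_commuting_commutes[OF zy[symmetric]])
  also have "\<dots> = inv_sqrt_series y * z"
    unfolding inv_sqrt_series_def by (rule suminf_mult2[OF s, symmetric])
  finally show ?thesis .
qed

lemma norm_inv_sqrt_series_diff_one:
  fixes y :: "'a::{real_normed_algebra_1,banach}"
  assumes y: "norm y < 1"
  shows "norm (inv_sqrt_series y - 1) \<le> norm y / (1 - norm y)"
proof -
  let ?a = "\<lambda>k. inv_sqrt_coeff k *\<^sub>R y ^ k"
  have sn: "summable (\<lambda>k. norm (?a (Suc k)))"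
    using summable_norm_inv_sqrt_terms[OF y] by (subst summable_Suc_iff)
  have sg: "summable (\<lambda>k. norm y ^ k)" using y by (simp add: summable_geometric)
  have "inv_sqrt_series y - 1 = (\<Sum>k. ?a (Suc k))"
    using suminf_split_head[OF summable_norm_cancel[OF summable_norm_inv_sqrt_terms[OF y]]]
    by (simp add: inv_sqrt_series_def)
  also have "norm \<dots> \<le> (\<Sum>k. norm (?a (Suc k)))"
    by (rule summable_norm[OF sn])
  also have "\<dots> \<le> (\<Sum>k. norm y * norm y ^ k)"
    by (rule suminf_le[OF _ sn summable_mult[OF sg]]) (metis norm_inv_sqrt_term_le power_Suc)
  also have "\<dots> = norm y / (1 - norm y)"
    using suminf_mult[OF sg, of "norm y"] suminf_geometric[of "norm y"] y by simp
  finally show ?thesis .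
qed

context unital_cstar
begin

lemma st_inv_sqrt_series:
  assumes "norm y < 1" and "st y = y"
  shows "st (inv_sqrt_series y) = inv_sqrt_series y"
proof -
  have "st (inv_sqrt_series y) = (\<Sum>k. st (inv_sqrt_coeff k *\<^sub>R y ^ k))"
    unfolding inv_sqrt_series_def
    by (rule bounded_linear.suminf[OF bounded_linear_st summable_norm_cancel,
          OF summable_norm_inv_sqrt_terms]) (rule assms)
  then show ?thesis by (simp add: st_scaleR st_power assms(2) inv_sqrt_series_def)
qed

end

context unital_cstar
begin

section \<open>Almost unitary elements are close to unitaries\<close>

lemma unitary_polar_part:
  assumes small: "norm (1 - st x * x) < 1" and right_inv: "x * r = 1"
  shows "unitary (x * inv_sqrt_series (1 - st x * x))"
proof -
  define y where "y = 1 - st x * x"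
  define p where "p = inv_sqrt_series y"
  have y: "norm y < 1" "st y = y" using small by (simp_all add: y_def st_diff st_mult)
  have sp: "st p = p" unfolding p_def by (rule st_inv_sqrt_series[OF y])
  have yp: "(1 - y) * p = p * (1 - y)"
    unfolding p_def by (rule inv_sqrt_series_commute[OF y(1)]) (simp add: algebra_simps)
  have pp: "p * p * (1 - y) = 1"
    using inv_sqrt_series_square[OF y(1)] by (simp add: p_def)
  have "p * p * st x = p * p * (st x * x) * r"
    using right_inv by (simp add: mult.assoc)
  then have left_inv_eq: "p * p * st x = r"
    using pp by (simp add: y_def)
  have "st (x * p) * (x * p) = p * (st x * x) * p" by (simp add: st_mult sp mult.assoc)
  also have "\<dots> = p * ((1 - y) * p)" by (simp add: y_def mult.assoc)
  also have "\<dots> = 1" using pp by (simp add: yp mult.assoc)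
  finally have "st (x * p) * (x * p) = 1" .
  moreover have "(x * p) * st (x * p) = 1"
    using left_inv_eq right_inv by (simp add: st_mult sp mult.assoc)
  ultimately show ?thesis by (simp add: unitary_el_def p_def y_def)
qed

lemma exists_unitary_near:
  assumes h1: "norm (1 - st x * x) < 1/2" and h2: "norm (1 - x * st x) < 1"
  shows "\<exists>u. unitary u \<and> norm (u - x) \<le> 2 * norm x * norm (1 - st x * x)"
proof -
  define y where "y = 1 - st x * x"
  define y' where "y' = 1 - x * st x"
  have "x * (st x * (\<Sum>k. y' ^ k)) = 1"
    using neumann_series(2)[of y'] h2 by (simp add: y'_def mult.assoc[symmetric])
  then have u: "unitary (x * inv_sqrt_series y)"
    unfolding y_def by (rule unitary_polar_part[rotated]) (use h1 in simp)
  have "x * inv_sqrt_series y - x = x * (inv_sqrt_series y - 1)"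
    by (simp add: right_diff_distrib)
  then have "norm (x * inv_sqrt_series y - x) \<le> norm x * norm (inv_sqrt_series y - 1)"
    by (simp add: norm_mult_ineq)
  also have "\<dots> \<le> norm x * (norm y / (1 - norm y))"
    using h1 by (intro mult_left_mono norm_inv_sqrt_series_diff_one) (simp_all add: y_def)
  also have "\<dots> \<le> norm x * (2 * norm y)"
  proof (intro mult_left_mono)
    have "norm y < 1/2" using h1 by (simp add: y_def)
    then show "norm y / (1 - norm y) \<le> 2 * norm y"
      using mult_left_mono[of "2 * norm y" 1 "norm y"] by (simp add: pos_divide_le_eq algebra_simps)
  qed simp
  finally show ?thesis
    using u by (intro exI[of _ "x * inv_sqrt_series y"]) (simp add: y_def mult.assoc)
qed

section \<open>Unital *-homomorphisms are contractive\<close>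

definition unital_star_hom :: "('a \<Rightarrow> 'a) \<Rightarrow> bool" where
  "unital_star_hom \<phi> \<longleftrightarrow> (\<forall>x y. \<phi> (x + y) = \<phi> x + \<phi> y) \<and> (\<forall>c x. \<phi> (sc c x) = sc c (\<phi> x)) \<and>
     (\<forall>x y. \<phi> (x * y) = \<phi> x * \<phi> y) \<and> \<phi> 1 = 1 \<and> (\<forall>x. \<phi> (st x) = st (\<phi> x))"

lemma star_aut_imp_unital_star_hom: "star_aut sc st \<phi> \<Longrightarrow> unital_star_hom \<phi>"
  by (simp add: star_aut_def unital_star_hom_def)

context
  fixes \<phi> assumes \<phi>: "unital_star_hom \<phi>"
begin

lemma hom_add: "\<phi> (x + y) = \<phi> x + \<phi> y"
  and hom_sc: "\<phi> (sc c x) = sc c (\<phi> x)"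
  and hom_mult: "\<phi> (x * y) = \<phi> x * \<phi> y"
  and hom_1: "\<phi> 1 = 1"
  and hom_st: "\<phi> (st x) = st (\<phi> x)"
  using \<phi> by (simp_all add: unital_star_hom_def)

lemma hom_0: "\<phi> 0 = 0"
  using hom_add[of 0 0] by simp

lemma hom_diff: "\<phi> (x - y) = \<phi> x - \<phi> y"
  using hom_add[of "x - y" y] by (simp add: algebra_simps)

lemma hom_sum: "\<phi> (sum f A) = (\<Sum>i\<in>A. \<phi> (f i))"
  by (induction A rule: infinite_finite_induct) (simp_all add: hom_0 hom_add)

lemma hom_power: "\<phi> (x ^ n) = \<phi> x ^ n"
  by (induction n) (simp_all add: hom_mult hom_1)

lemma hom_unitary: "unitary w \<Longrightarrow> unitary (\<phi> w)"
  unfolding unitary_el_def by (metis hom_mult hom_1 hom_st)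

end

text \<open>$H$ is the real part of $w = H + iS$, and $w^* w = 1$.\<close>
lemma norm_le_one_if_sin_cos:
  assumes H: "st H = H" and S: "st S = S" and SH: "S * H = H * S" and S2: "S * S = 1 - H * H"
  shows "norm H \<le> 1"
proof -
  define w where "w = H + sc \<i> S"
  have stw: "st w = H + sc (- \<i>) S" by (simp add: w_def st_add st_sc H S)
  have "st w * w = (H + sc (- \<i>) S) * (H + sc \<i> S)"
    unfolding stw by (simp add: w_def)
  also have "\<dots> = H * H + S * S"
    by (simp add: distrib_left distrib_right left_diff_distrib right_diff_distrib sc_diff
        sc_mult_left sc_mult_right SH sc_minus_left)
  finally have "st w * w = H * H + S * S" .
  then have "norm w = 1"
    using norm_st_mult_self[of w] norm_ge_zero[of w] by (simp add: S2 power2_eq_1_iff)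
  moreover have "H + H = w + st w" unfolding stw by (simp add: w_def sc_minus_left)
  ultimately have "norm (H + H) \<le> 2" using norm_triangle_ineq[of w "st w"] by simp
  moreover have "norm (H + H) = 2 * norm H"
    using norm_scaleR[of 2 H] by (simp add: scaleR_2)
  ultimately show ?thesis by simp
qed

lemma exists_sqrt_one_minus_square:
  assumes h: "st h = h" "norm h < 1"
  obtains s where "st s = s" "s * h = h * s" "s * s = 1 - h * h"
proof
  define y where "y = h * h"
  define p where "p = inv_sqrt_series y"
  have "norm y \<le> norm h * norm h"
    unfolding y_def by (rule norm_mult_ineq)
  also have "\<dots> < 1"
    using h(2) by (simp add: power2_eq_square[symmetric] power_less_one_iff)
  finally have y: "norm y < 1" "st y = y"
    using h(1) by (simp_all add: y_def st_mult)
  have sp: "st p = p" unfolding p_def by (rule st_inv_sqrt_series[OF y])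
  have hp: "h * p = p * h" and yp: "(1 - y) * p = p * (1 - y)"
    unfolding p_def by (rule inv_sqrt_series_commute[OF y(1)]; simp add: y_def algebra_simps)+
  show "st (p * (1 - y)) = p * (1 - y)"
    by (simp add: st_mult st_diff y(2) sp yp)
  have "(1 - y) * h = h * (1 - y)" by (simp add: y_def algebra_simps)
  then show "p * (1 - y) * h = h * (p * (1 - y))"
    by (metis hp mult.assoc)
  have "p * (1 - y) * (p * (1 - y)) = p * ((1 - y) * p) * (1 - y)"
    by (simp add: mult.assoc)
  also have "\<dots> = p * p * (1 - y) * (1 - y)"
    by (simp add: yp mult.assoc)
  finally show "p * (1 - y) * (p * (1 - y)) = 1 - h * h"
    using inv_sqrt_series_square[OF y(1)] by (simp add: p_def y_def)
qed

lemma norm_hom_le: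
  assumes \<phi>: "unital_star_hom \<phi>"
  shows "norm (\<phi> a) \<le> norm a"
proof (rule dense_ge)
  fix r assume r: "norm a < r"
  then have r0: "r > 0" using norm_ge_zero[of a] by linarith
  define b where "b = sc (complex_of_real (1 / r)) a"
  have nb: "norm b < 1" using r r0 by (simp add: b_def norm_sc norm_divide)
  define h where "h = st b * b"
  have h: "st h = h" "norm h < 1"
    using nb norm_st_mult_self[of b] by (simp_all add: h_def st_mult power_less_one_iff)
  obtain s where s: "st s = s" "s * h = h * s" "s * s = 1 - h * h"
    using exists_sqrt_one_minus_square[OF h] .
  have "norm (\<phi> h) \<le> 1"
  proof (rule norm_le_one_if_sin_cos)
    show "st (\<phi> h) = \<phi> h" "st (\<phi> s) = \<phi> s"
      using h(1) s(1) by (simp_all flip: hom_st[OF \<phi>])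
    show "\<phi> s * \<phi> h = \<phi> h * \<phi> s"
      using s(2) by (simp flip: hom_mult[OF \<phi>])
    show "\<phi> s * \<phi> s = 1 - \<phi> h * \<phi> h"
      using arg_cong[OF s(3), of \<phi>] by (simp add: hom_mult[OF \<phi>] hom_1[OF \<phi>] hom_diff[OF \<phi>])
  qed
  then have "(norm (\<phi> b))\<^sup>2 \<le> 1"
    by (simp add: h_def hom_mult[OF \<phi>] hom_st[OF \<phi>] norm_st_mult_self[symmetric])
  then have "norm (\<phi> b) \<le> 1" by (simp add: power_le_one_iff)
  moreover have "norm (\<phi> b) = norm (\<phi> a) / r"
    using r0 by (simp add: b_def hom_sc[OF \<phi>] norm_sc norm_divide)
  ultimately show "norm (\<phi> a) \<le> r" using r0 by (simp add: field_simps)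
qed

end

section \<open>Polynomials in a unitary\<close>

lemma poly_coeff_bound_circle:
  fixes Q :: "complex poly"
  assumes "\<And>z. cmod z = 1 \<Longrightarrow> cmod (poly Q z) \<le> B"
  shows "cmod (coeff Q k) \<le> B"
proof -
  have higher_deriv: "(deriv ^^ n) (poly Q) = poly ((pderiv ^^ n) Q)" for n
    by (induction n) (auto simp: DERIV_imp_deriv[OF poly_DERIV])
  have "norm ((deriv ^^ k) (poly Q) 0) \<le> fact k * B / 1 ^ k"
  proof (rule Cauchy_inequality)
    show "poly Q holomorphic_on ball 0 1"
      using poly_holomorphic_on[of "\<lambda>z. z" "ball 0 1" Q] by (simp add: holomorphic_on_id)
    show "continuous_on (cball 0 1) (poly Q)" by (intro continuous_intros)
  qed (use assms in auto)
  then have "norm (fact k * coeff Q k) \<le> fact k * B"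
    by (simp add: higher_deriv poly_0_coeff_0 coeff_higher_pderiv pochhammer_fact[symmetric])
  then show ?thesis by (simp add: norm_mult)
qed

lemma exp_growth_beats_linear:
  fixes t :: real and d :: nat
  assumes t: "t > 1"
  obtains m where "t ^ (2 ^ m) > 2 ^ m * real d + 1"
proof -
  obtain m where m: "(2 * d + 1) / (t - 1)\<^sup>2 < 2 ^ m"
    using real_arch_pow[of 2 "(2 * d + 1) / (t - 1)\<^sup>2"] by auto
  define n :: nat where "n = 2 ^ m"
  have n1: "n \<ge> 1" by (simp add: n_def)
  have "real n * (t - 1) \<le> t ^ n"
    using Bernoulli_inequality[of "t - 1" n] t by simp
  then have "(real n * (t - 1))\<^sup>2 \<le> (t ^ n)\<^sup>2"
    using t by (intro power_mono) auto
  also have "(t ^ n)\<^sup>2 = t ^ (2 ^ Suc m)"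
    by (simp add: n_def power_mult[symmetric] mult.commute)
  finally have "(real n * (t - 1))\<^sup>2 \<le> t ^ (2 ^ Suc m)" .
  moreover have "real n * (2 * d + 1) < (real n * (t - 1))\<^sup>2"
    using m t n1 by (simp add: n_def pos_divide_less_eq power2_eq_square mult_ac)
  moreover have "2 ^ Suc m * real d + 1 \<le> real n * (2 * d + 1)"
    by (simp add: n_def algebra_simps)
  ultimately have "2 ^ Suc m * real d + 1 < t ^ (2 ^ Suc m)"
    by linarith
  then show ?thesis using that by blast
qed

context unital_cstar
begin

definition poly_eval :: "'a \<Rightarrow> complex poly \<Rightarrow> 'a" where
  "poly_eval w P = (\<Sum>i\<le>degree P. sc (coeff P i) (w ^ i))"

lemma poly_eval_upto: "degree P \<le> N \<Longrightarrow> poly_eval w P = (\<Sum>i\<le>N. sc (coeff P i) (w ^ i))"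
  unfolding poly_eval_def by (rule sum.mono_neutral_left) (auto simp: coeff_eq_0)

lemma poly_eval_0 [simp]: "poly_eval w 0 = 0"
  by (simp add: poly_eval_def)

lemma poly_eval_const: "poly_eval w [:a:] = sc a 1"
  by (simp add: poly_eval_def)

lemma poly_eval_1 [simp]: "poly_eval w 1 = 1"
  by (simp add: poly_eval_def)

lemma poly_eval_add: "poly_eval w (P + Q) = poly_eval w P + poly_eval w Q"
proof -
  let ?N = "max (degree P) (degree Q)"
  have "poly_eval w (P + Q) = (\<Sum>i\<le>?N. sc (coeff (P + Q) i) (w ^ i))"
    by (rule poly_eval_upto) (simp add: degree_add_le)
  also have "\<dots> = (\<Sum>i\<le>?N. sc (coeff P i) (w ^ i)) + (\<Sum>i\<le>?N. sc (coeff Q i) (w ^ i))"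
    by (simp add: sc_add_left sum.distrib)
  finally show ?thesis by (simp add: poly_eval_upto[symmetric])
qed

lemma poly_eval_sum: "poly_eval w (sum f A) = (\<Sum>i\<in>A. poly_eval w (f i))"
  by (induction A rule: infinite_finite_induct) (auto simp: poly_eval_add)

lemma poly_eval_smult: "poly_eval w (smult c P) = sc c (poly_eval w P)"
  using poly_eval_upto[OF degree_smult_le, of w c P] by (simp add: poly_eval_def sc_sum)

lemma poly_eval_pCons: "poly_eval w (pCons a P) = sc a 1 + w * poly_eval w P"
proof -
  have "poly_eval w (pCons a P) = (\<Sum>i\<le>Suc (degree P). sc (coeff (pCons a P) i) (w ^ i))"
    by (rule poly_eval_upto) (simp add: degree_pCons_le)
  also have "\<dots> = sc a 1 + (\<Sum>i\<le>degree P. sc (coeff P i) (w ^ Suc i))"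
    by (simp only: sum.atMost_Suc_shift) simp
  finally show ?thesis by (simp add: poly_eval_def sum_distrib_left sc_mult_right)
qed

lemma poly_eval_mult: "poly_eval w (P * Q) = poly_eval w P * poly_eval w Q"
proof (induction P rule: pCons_induct)
  case (pCons a P)
  have "poly_eval w (pCons a P * Q) = sc a (poly_eval w Q) + w * (poly_eval w P * poly_eval w Q)"
    by (simp add: poly_eval_add poly_eval_smult poly_eval_pCons pCons.IH)
  then show ?case by (simp add: poly_eval_pCons distrib_right sc_mult_left mult.assoc)
qed simp

lemma poly_eval_power: "poly_eval w (P ^ n) = poly_eval w P ^ n"
  by (induction n) (simp_all add: poly_eval_mult)

lemma poly_eval_monom: "poly_eval w (monom c n) = sc c (w ^ n)"
  using poly_eval_upto[OF degree_monom_le, of w c n]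
  by (simp add: coeff_monom if_distrib[of "\<lambda>c. sc c _"] cong: if_cong)

lemma poly_eval_pcompose_scale: "poly_eval w (pcompose P [:0, c:]) = poly_eval (sc c w) P"
  by (induction P rule: pCons_induct)
    (simp_all add: pcompose_pCons poly_eval_add poly_eval_mult poly_eval_const poly_eval_pCons
      poly_eval_smult sc_mult_left sc_mult_right)

lemma st_poly_eval: "st (poly_eval w P) = (\<Sum>i\<le>degree P. sc (cnj (coeff P i)) (st w ^ i))"
  by (simp add: poly_eval_def st_sum st_sc st_power)

lemma commute_sum_sc_powers:
  "a * w = w * a \<Longrightarrow> a * (\<Sum>i\<in>A. sc (f i) (w ^ i)) = (\<Sum>i\<in>A. sc (f i) (w ^ i)) * a"
  by (simp add: sum_distrib_left sum_distrib_right sc_mult_left sc_mult_right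
      power_commuting_commutes)

lemma st_commute_poly_eval: "unitary w \<Longrightarrow> st w * poly_eval w P = poly_eval w P * st w"
  unfolding poly_eval_def by (rule commute_sum_sc_powers) (simp add: unitary_el_def)

lemma poly_eval_normal:
  "unitary w \<Longrightarrow> st (poly_eval w P) * poly_eval w P = poly_eval w P * st (poly_eval w P)"
  unfolding st_poly_eval
  by (rule commute_sum_sc_powers[symmetric]) (rule st_commute_poly_eval[symmetric])

lemma norm_poly_eval_le_coeffs:
  assumes "norm w \<le> 1"
  shows "norm (poly_eval w P) \<le> (\<Sum>i\<le>degree P. cmod (coeff P i))"
proof -
  have "norm (sc (coeff P i) (w ^ i)) \<le> cmod (coeff P i)" for i
    using assms norm_power_ineq[of w i] power_le_one[of "norm w" i]
    by (simp add: norm_sc mult_left_le)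
  then show ?thesis unfolding poly_eval_def by (rule order_trans[OF norm_sum sum_mono])
qed

lemma norm_square_normal:
  assumes n: "st y * y = y * st y"
  shows "norm (y * y) = (norm y)\<^sup>2"
proof -
  have "st (y * y) * (y * y) = st y * (st y * y) * y"
    by (simp add: st_mult mult.assoc)
  also have "\<dots> = st y * (y * st y) * y"
    by (simp only: n)
  finally have eq: "st (y * y) * (y * y) = (st y * y) * (st y * y)"
    by (simp add: mult.assoc)
  have "(norm (y * y))\<^sup>2 = norm ((st y * y) * (st y * y))"
    using norm_st_mult_self[of "y * y"] eq by simp
  also have "\<dots> = (norm (st y * y))\<^sup>2"
    using norm_st_mult_self[of "st y * y"] by (simp add: st_mult)
  also have "\<dots> = ((norm y)\<^sup>2)\<^sup>2"
    by (simp add: norm_st_mult_self)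
  finally show ?thesis by (rule power2_eq_imp_eq) simp_all
qed

lemma norm_power2_normal:
  assumes n: "st x * x = x * st x"
  shows "norm (x ^ (2 ^ m)) = norm x ^ (2 ^ m)"
proof (induction m)
  case (Suc m)
  have "st x ^ k * x = x * st x ^ k" for k
    by (rule power_commuting_commutes[OF n])
  then have "x ^ k * st x ^ k = st x ^ k * x ^ k" for k
    by (rule power_commuting_commutes[OF sym])
  then have "st (x ^ 2 ^ m) * x ^ 2 ^ m = x ^ 2 ^ m * st (x ^ 2 ^ m)"
    by (simp add: st_power)
  then have "norm (x ^ 2 ^ m * x ^ 2 ^ m) = (norm (x ^ 2 ^ m))\<^sup>2"
    by (rule norm_square_normal)
  then show ?case by (simp add: Suc power_add[symmetric] power_mult[symmetric] mult_2 mult.commute)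
qed simp

text \<open>No spectral theory is needed: the coefficient bound gives $\|P(w)^N\| \le (N \deg P + 1) B^N$,
  and for the normal element $P(w)$ and $N = 2^m$ the left-hand side is $\|P(w)\|^N$.\<close>
lemma norm_poly_eval_unitary_le:
  assumes u: "unitary w" and B: "\<And>z. cmod z = 1 \<Longrightarrow> cmod (poly P z) \<le> B"
  shows "norm (poly_eval w P) \<le> B"
proof (rule ccontr)
  assume c: "\<not> norm (poly_eval w P) \<le> B"
  have B0: "B \<ge> 0" using B[of 1] by (meson norm_ge_zero order_trans norm_one)
  have key: "norm (poly_eval w P) ^ (2 ^ m) \<le> (2 ^ m * real (degree P) + 1) * B ^ (2 ^ m)" for m
  proof -
    have "norm (poly_eval w P) ^ (2 ^ m) = norm (poly_eval w (P ^ 2 ^ m))"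
      by (simp add: poly_eval_power norm_power2_normal poly_eval_normal[OF u])
    also have "\<dots> \<le> (\<Sum>i\<le>degree (P ^ 2 ^ m). cmod (coeff (P ^ 2 ^ m) i))"
      using norm_unitary[OF u] by (intro norm_poly_eval_le_coeffs) simp
    also have "\<dots> \<le> (\<Sum>i\<le>degree (P ^ 2 ^ m). B ^ 2 ^ m)"
      using B by (intro sum_mono poly_coeff_bound_circle) (simp add: norm_power power_mono)
    also have "\<dots> = (real (degree (P ^ 2 ^ m)) + 1) * B ^ 2 ^ m"
      by simp
    also have "\<dots> \<le> (2 ^ m * real (degree P) + 1) * B ^ (2 ^ m)"
      using of_nat_mono[OF degree_power_le[of P "2 ^ m"], where 'a=real] B0
      by (intro mult_right_mono) (simp_all add: mult.commute)
    finally show ?thesis .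
  qed
  show False
  proof (cases "B = 0")
    case True
    then show False using key[of 0] c by simp
  next
    case False
    then have Bp: "B > 0" using B0 by simp
    have "norm (poly_eval w P) / B > 1" using c Bp by simp
    then obtain m where "(norm (poly_eval w P) / B) ^ (2 ^ m) > 2 ^ m * real (degree P) + 1"
      by (rule exp_growth_beats_linear)
    then show False using key[of m] Bp by (simp add: power_divide pos_less_divide_eq)
  qed
qed

end

section \<open>Laurent polynomials in a unitary\<close>

text \<open>A pair \<open>(P, D)\<close> represents the Laurent polynomial $z \mapsto P(z) / z^D$.\<close>
type_synonym laurent = "complex poly \<times> nat"

fun laurent_fun :: "laurent \<Rightarrow> complex \<Rightarrow> complex" where
  "laurent_fun (P, D) z = poly P z / z ^ D"

fun laurent_add :: "laurent \<Rightarrow> laurent \<Rightarrow> laurent" where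
  "laurent_add (P, D) (Q, E) = (monom 1 E * P + monom 1 D * Q, D + E)"

fun laurent_mult :: "laurent \<Rightarrow> laurent \<Rightarrow> laurent" where
  "laurent_mult (P, D) (Q, E) = (P * Q, D + E)"

fun laurent_smult :: "complex \<Rightarrow> laurent \<Rightarrow> laurent" where
  "laurent_smult c (P, D) = (smult c P, D)"

fun laurent_cnj :: "laurent \<Rightarrow> laurent" where
  "laurent_cnj (P, D) = ((\<Sum>i\<le>degree P. monom (cnj (coeff P i)) (D + degree P - i)), degree P)"

fun laurent_rotate :: "complex \<Rightarrow> laurent \<Rightarrow> laurent" where
  "laurent_rotate c (P, D) = (smult (cnj c ^ D) (pcompose P [:0, c:]), D)"

text \<open>Lipschitz constant of $w \mapsto L(w)$ on unitaries, relative to $\sup_{|z|=1} |L(z)|$.\<close>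
fun laurent_lip :: "laurent \<Rightarrow> real" where
  "laurent_lip (P, D) = (real (degree P) + 1) * (real D + real (degree P))"

lemma laurent_lip_nonneg: "laurent_lip R \<ge> 0"
  by (cases R) simp

lemma cnj_unit_circle: "cmod z = 1 \<Longrightarrow> cnj z = 1 / z"
  using complex_norm_square[of z] by (auto simp: eq_divide_eq mult.commute)

lemma laurent_fun_add: "z \<noteq> 0 \<Longrightarrow> laurent_fun (laurent_add R S) z = laurent_fun R z + laurent_fun S z"
  by (cases R; cases S) (simp add: poly_monom field_simps power_add)

lemma laurent_fun_add_circle:
  "cmod z = 1 \<Longrightarrow> laurent_fun (laurent_add R S) z = laurent_fun R z + laurent_fun S z"
  by (rule laurent_fun_add) auto

lemma laurent_fun_mult: "laurent_fun (laurent_mult R S) z = laurent_fun R z * laurent_fun S z"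
  by (cases R; cases S) (simp add: power_add)

lemma laurent_fun_smult: "laurent_fun (laurent_smult c R) z = c * laurent_fun R z"
  by (cases R) simp

lemma laurent_fun_cnj:
  assumes z: "cmod z = 1"
  shows "laurent_fun (laurent_cnj R) z = cnj (laurent_fun R z)"
proof (cases R)
  case (Pair P D)
  have z0: "z \<noteq> 0" using z by auto
  let ?d = "degree P"
  have "laurent_fun (laurent_cnj R) z = (\<Sum>i\<le>?d. cnj (coeff P i) * z ^ (D + ?d - i) / z ^ ?d)"
    by (simp add: Pair poly_sum poly_monom sum_divide_distrib)
  also have "\<dots> = (\<Sum>i\<le>?d. cnj (coeff P i) * cnj z ^ i * z ^ D)"
  proof (rule sum.cong)
    fix i assume "i \<in> {..?d}"
    then have "z ^ (D + ?d - i) = z ^ D * z ^ (?d - i)" and "z ^ ?d = z ^ i * z ^ (?d - i)"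
      by (simp_all flip: power_add)
    then show "cnj (coeff P i) * z ^ (D + ?d - i) / z ^ ?d = cnj (coeff P i) * cnj z ^ i * z ^ D"
      using z0 by (simp add: cnj_unit_circle[OF z] power_divide field_simps)
  qed simp
  also have "\<dots> = cnj (poly P z) * z ^ D"
    by (simp add: poly_altdef sum_distrib_right)
  finally show ?thesis
    using z0 by (simp add: Pair cnj_unit_circle[OF z] power_divide field_simps)
qed

lemma laurent_fun_rotate:
  assumes "cmod c = 1"
  shows "laurent_fun (laurent_rotate c R) z = laurent_fun R (c * z)"
  using cnj_unit_circle[OF assms]
  by (cases R) (simp add: poly_pcompose power_one_over power_mult_distrib mult.commute)

lemma norm_laurent_fun: "cmod z = 1 \<Longrightarrow> cmod (laurent_fun (P, D) z) = cmod (poly P z)"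
  by (simp add: norm_divide norm_power)

context unital_cstar
begin

fun laurent_eval :: "'a \<Rightarrow> laurent \<Rightarrow> 'a" where
  "laurent_eval w (P, D) = st w ^ D * poly_eval w P"

lemma laurent_eval_expand:
  "laurent_eval w (P, D) = (\<Sum>i\<le>degree P. sc (coeff P i) (st w ^ D * w ^ i))"
  by (simp add: poly_eval_def sum_distrib_left sc_mult_right)

lemma unitary_power_cancel: "unitary w \<Longrightarrow> st w ^ (a + b) * w ^ b = st w ^ a"
proof (induction b)
  case (Suc b)
  have "st w ^ (a + Suc b) * w ^ Suc b = st w ^ (a + b) * (st w * w) * w ^ b"
    by (simp only: add_Suc_right power_Suc2[of "st w"] power_Suc[of w] mult.assoc)
  then show ?case using Suc by (simp add: unitary_el_def)
qed simp

lemma laurent_eval_add: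
  assumes u: "unitary w"
  shows "laurent_eval w (laurent_add R S) = laurent_eval w R + laurent_eval w S"
proof (cases R; cases S)
  fix P D Q E assume R: "R = (P, D)" and S: "S = (Q, E)"
  have "laurent_eval w (laurent_add R S) =
      st w ^ (D + E) * w ^ E * poly_eval w P + st w ^ (E + D) * w ^ D * poly_eval w Q"
    by (simp add: R S poly_eval_add poly_eval_mult poly_eval_monom distrib_left mult.assoc add.commute)
  then show ?thesis by (simp add: R S unitary_power_cancel[OF u])
qed

lemma laurent_eval_mult:
  assumes u: "unitary w"
  shows "laurent_eval w (laurent_mult R S) = laurent_eval w R * laurent_eval w S"
proof (cases R; cases S)
  fix P D Q E assume R: "R = (P, D)" and S: "S = (Q, E)"
  have comm: "poly_eval w P * st w ^ E = st w ^ E * poly_eval w P"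
    using power_commuting_commutes[OF st_commute_poly_eval[OF u]] by simp
  have "laurent_eval w R * laurent_eval w S = st w ^ D * (poly_eval w P * st w ^ E) * poly_eval w Q"
    by (simp add: R S mult.assoc)
  also have "\<dots> = laurent_eval w (laurent_mult R S)"
    by (simp only: comm) (simp add: R S poly_eval_mult power_add mult.assoc)
  finally show ?thesis ..
qed

lemma laurent_eval_smult: "laurent_eval w (laurent_smult c R) = sc c (laurent_eval w R)"
  by (cases R) (simp add: poly_eval_smult sc_mult_right)

lemma laurent_eval_cnj:
  assumes u: "unitary w"
  shows "laurent_eval w (laurent_cnj R) = st (laurent_eval w R)"
proof (cases R)
  case (Pair P D)
  let ?d = "degree P"
  have "laurent_eval w (laurent_cnj R) =
      (\<Sum>i\<le>?d. sc (cnj (coeff P i)) (st w ^ ?d * w ^ (D + ?d - i)))"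
    by (simp add: Pair poly_eval_sum poly_eval_monom sum_distrib_left sc_mult_right)
  also have "\<dots> = (\<Sum>i\<le>?d. sc (cnj (coeff P i)) (st w ^ i * w ^ D))"
  proof (rule sum.cong)
    fix i assume i: "i \<in> {..?d}"
    have "st w ^ ?d * w ^ (D + ?d - i) = st w ^ (i + (?d - i)) * w ^ (?d - i) * w ^ D"
      using i by (simp add: mult.assoc power_add[symmetric] add.commute)
    then show "sc (cnj (coeff P i)) (st w ^ ?d * w ^ (D + ?d - i)) =
        sc (cnj (coeff P i)) (st w ^ i * w ^ D)"
      by (simp add: unitary_power_cancel[OF u])
  qed simp
  also have "\<dots> = st (laurent_eval w R)"
    by (simp add: Pair st_mult st_power st_poly_eval sum_distrib_right sc_mult_left)
  finally show ?thesis .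
qed

lemma laurent_eval_sc: "cmod c = 1 \<Longrightarrow> laurent_eval (sc c w) R = laurent_eval w (laurent_rotate c R)"
  by (cases R)
    (simp add: st_sc poly_eval_pcompose_scale sc_power poly_eval_smult sc_mult_left sc_mult_right)

lemma hom_laurent_eval: "unital_star_hom \<phi> \<Longrightarrow> \<phi> (laurent_eval w R) = laurent_eval (\<phi> w) R"
  by (cases R) (simp add: poly_eval_def hom_mult hom_st hom_power hom_sum hom_sc)

lemma norm_laurent_eval_le:
  assumes u: "unitary w" and B: "\<And>z. cmod z = 1 \<Longrightarrow> cmod (laurent_fun R z) \<le> B"
  shows "norm (laurent_eval w R) \<le> B"
proof (cases R)
  case (Pair P D)
  have "norm (st w ^ D) \<le> 1"
    using norm_unitary[OF unitary_st[OF u]] norm_power_ineq[of "st w" D] by simp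
  moreover have "norm (poly_eval w P) \<le> B"
    by (rule norm_poly_eval_unitary_le[OF u]) (use B norm_laurent_fun in \<open>force simp: Pair\<close>)
  ultimately have "norm (st w ^ D) * norm (poly_eval w P) \<le> 1 * B"
    by (intro mult_mono) auto
  then show ?thesis by (simp add: Pair) (meson norm_mult_ineq order_trans)
qed

lemma norm_laurent_eval_diff_le:
  assumes u: "unitary w"
    and B: "\<And>z. cmod z = 1 \<Longrightarrow> cmod (laurent_fun R z - laurent_fun S z) \<le> B"
  shows "norm (laurent_eval w R - laurent_eval w S) \<le> B"
proof -
  let ?T = "laurent_add R (laurent_smult (-1) S)"
  have "laurent_eval w R - laurent_eval w S = laurent_eval w ?T"
    by (simp add: laurent_eval_add[OF u] laurent_eval_smult sc_minus_left)
  also have "norm \<dots> \<le> B"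
    using B by (intro norm_laurent_eval_le[OF u]) (simp add: laurent_fun_add_circle laurent_fun_smult)
  finally show ?thesis .
qed

lemma coeff_bound_laurent:
  "(\<And>z. cmod z = 1 \<Longrightarrow> cmod (laurent_fun (P, D) z) \<le> B) \<Longrightarrow> cmod (coeff P i) \<le> B"
  by (rule poly_coeff_bound_circle) (use norm_laurent_fun in force)

lemma norm_sum_coeffs_le:
  assumes B: "\<And>z. cmod z = 1 \<Longrightarrow> cmod (laurent_fun (P, D) z) \<le> B"
    and m: "\<And>i. i \<le> degree P \<Longrightarrow> norm (m i) \<le> K"
  shows "norm (\<Sum>i\<le>degree P. sc (coeff P i) (m i)) \<le> (real (degree P) + 1) * B * K"
proof -
  have B0: "B \<ge> 0" using B[of 1] by (meson norm_ge_zero order_trans norm_one)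
  have "norm (\<Sum>i\<le>degree P. sc (coeff P i) (m i)) \<le> (\<Sum>i\<le>degree P. cmod (coeff P i) * norm (m i))"
    by (rule order_trans[OF norm_sum]) (simp add: norm_sc)
  also have "\<dots> \<le> (\<Sum>i\<le>degree P. B * K)"
    by (intro sum_mono mult_mono m coeff_bound_laurent[OF B]) (simp_all add: B0)
  finally show ?thesis by (simp add: algebra_simps)
qed

lemma norm_power_diff_le:
  assumes "norm (x::'a) \<le> 1" "norm y \<le> 1"
  shows "norm (x ^ n - y ^ n) \<le> n * norm (x - y)"
proof (induction n)
  case (Suc n)
  have "x ^ Suc n - y ^ Suc n = (x - y) * x ^ n + y * (x ^ n - y ^ n)"
    by (simp add: algebra_simps)
  also have "norm \<dots> \<le> norm (x - y) * 1 + 1 * norm (x ^ n - y ^ n)"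
    using assms norm_power_ineq[of x n] power_le_one[of "norm x" n]
    by (intro order_trans[OF norm_triangle_ineq] add_mono order_trans[OF norm_mult_ineq]
        mult_mono) auto
  finally show ?case using Suc by (simp add: algebra_simps)
qed simp

lemma norm_laurent_eval_diff_unitaries_le:
  assumes u1: "unitary w1" and u2: "unitary w2"
    and B: "\<And>z. cmod z = 1 \<Longrightarrow> cmod (laurent_fun R z) \<le> B"
  shows "norm (laurent_eval w1 R - laurent_eval w2 R) \<le> laurent_lip R * B * norm (w1 - w2)"
proof (cases R)
  case (Pair P D)
  have n: "norm w1 \<le> 1" "norm w2 \<le> 1" "norm (st w1) \<le> 1" "norm (st w2) \<le> 1"
    using norm_unitary[OF u1] norm_unitary[OF u2] by simp_all
  have mono: "norm (st w1 ^ D * w1 ^ i - st w2 ^ D * w2 ^ i) \<le> (real D + real (degree P)) * norm (w1 - w2)"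
    if i: "i \<le> degree P" for i
  proof -
    have "st w1 ^ D * w1 ^ i - st w2 ^ D * w2 ^ i =
        (st w1 ^ D - st w2 ^ D) * w1 ^ i + st w2 ^ D * (w1 ^ i - w2 ^ i)"
      by (simp add: algebra_simps)
    also have "norm \<dots> \<le> norm (st w1 ^ D - st w2 ^ D) * 1 + 1 * norm (w1 ^ i - w2 ^ i)"
      using n norm_power_ineq[of w1 i] power_le_one[of "norm w1" i]
        norm_power_ineq[of "st w2" D] power_le_one[of "norm (st w2)" D]
      by (intro order_trans[OF norm_triangle_ineq] add_mono order_trans[OF norm_mult_ineq]
          mult_mono) auto
    also have "\<dots> \<le> D * norm (w1 - w2) + i * norm (w1 - w2)"
      using n norm_power_diff_le[of "st w1" "st w2" D] norm_power_diff_le[of w1 w2 i]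
      by (simp add: add_mono flip: st_diff)
    also have "\<dots> \<le> D * norm (w1 - w2) + degree P * norm (w1 - w2)"
      using i by (intro add_left_mono mult_right_mono) auto
    finally show ?thesis by (simp add: distrib_right)
  qed
  have "norm (\<Sum>i\<le>degree P. sc (coeff P i) (st w1 ^ D * w1 ^ i - st w2 ^ D * w2 ^ i)) \<le>
      (real (degree P) + 1) * B * ((real D + real (degree P)) * norm (w1 - w2))"
    using B by (intro norm_sum_coeffs_le mono) (auto simp: Pair)
  moreover have "laurent_eval w1 R - laurent_eval w2 R =
      (\<Sum>i\<le>degree P. sc (coeff P i) (st w1 ^ D * w1 ^ i - st w2 ^ D * w2 ^ i))"
    unfolding Pair laurent_eval_expand by (simp add: sum_subtractf sc_diff)
  ultimately show ?thesis by (simp add: Pair mult_ac)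
qed

definition commutator :: "'a \<Rightarrow> 'a \<Rightarrow> 'a" where
  "commutator x a = x * a - a * x"

lemma norm_commutator_mult_le:
  assumes "norm x \<le> 1" "norm y \<le> 1"
  shows "norm (commutator (x * y) a) \<le> norm (commutator x a) + norm (commutator y a)"
proof -
  have "commutator (x * y) a = x * commutator y a + commutator x a * y"
    by (simp add: commutator_def algebra_simps)
  also have "norm \<dots> \<le> 1 * norm (commutator y a) + norm (commutator x a) * 1"
    using assms
    by (intro order_trans[OF norm_triangle_ineq] add_mono order_trans[OF norm_mult_ineq]
        mult_mono) auto
  finally show ?thesis by simp
qed

lemma norm_commutator_power_le:
  assumes "norm x \<le> 1"
  shows "norm (commutator (x ^ n) a) \<le> n * norm (commutator x a)"
proof (induction n)
  case (Suc n)
  have "norm (commutator (x ^ Suc n) a) \<le> norm (commutator x a) + norm (commutator (x ^ n) a)"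
    using assms norm_power_ineq[of x n] power_le_one[of "norm x" n]
    by (simp only: power_Suc) (rule norm_commutator_mult_le; simp)
  then show ?case using Suc by (simp add: algebra_simps)
qed (simp add: commutator_def)

lemma norm_commutator_st_le:
  assumes u: "unitary w"
  shows "norm (commutator (st w) a) \<le> norm (commutator w a)"
proof -
  have "st w * (a * w - w * a) * st w = st w * a * (w * st w) - (st w * w) * a * st w"
    by (simp add: algebra_simps)
  then have "commutator (st w) a = st w * (a * w - w * a) * st w"
    using u by (simp add: commutator_def unitary_el_def)
  also have "norm \<dots> \<le> norm (st w) * norm (a * w - w * a) * norm (st w)"
    by (rule order_trans[OF norm_mult_ineq]) (intro mult_right_mono norm_mult_ineq norm_ge_zero)
  also have "\<dots> = norm (commutator w a)"
    using norm_unitary[OF u] by (simp add: commutator_def norm_minus_commute)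
  finally show ?thesis .
qed

lemma norm_commutator_laurent_eval_le:
  assumes u: "unitary w" and B: "\<And>z. cmod z = 1 \<Longrightarrow> cmod (laurent_fun R z) \<le> B"
  shows "norm (commutator (laurent_eval w R) a) \<le> laurent_lip R * B * norm (commutator w a)"
proof (cases R)
  case (Pair P D)
  have n: "norm w \<le> 1" "norm (st w) \<le> 1" using norm_unitary[OF u] by simp_all
  have mono: "norm (commutator (st w ^ D * w ^ i) a) \<le> (real D + real (degree P)) * norm (commutator w a)"
    if i: "i \<le> degree P" for i
  proof -
    have "norm (commutator (st w ^ D * w ^ i) a) \<le>
        norm (commutator (st w ^ D) a) + norm (commutator (w ^ i) a)"
      using n norm_power_ineq[of w i] power_le_one[of "norm w" i]
        norm_power_ineq[of "st w" D] power_le_one[of "norm (st w)" D]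
      by (intro norm_commutator_mult_le) auto
    also have "\<dots> \<le> D * norm (commutator (st w) a) + i * norm (commutator w a)"
      by (intro add_mono norm_commutator_power_le n)
    also have "\<dots> \<le> D * norm (commutator w a) + i * norm (commutator w a)"
      by (intro add_mono mult_left_mono norm_commutator_st_le u) simp_all
    also have "\<dots> \<le> D * norm (commutator w a) + degree P * norm (commutator w a)"
      using i by (intro add_left_mono mult_right_mono) auto
    finally show ?thesis by (simp add: distrib_right)
  qed
  have "norm (\<Sum>i\<le>degree P. sc (coeff P i) (commutator (st w ^ D * w ^ i) a)) \<le>
      (real (degree P) + 1) * B * ((real D + real (degree P)) * norm (commutator w a))"
    using B by (intro norm_sum_coeffs_le mono) (auto simp: Pair)
  moreover have "commutator (laurent_eval w R) a =
      (\<Sum>i\<le>degree P. sc (coeff P i) (commutator (st w ^ D * w ^ i) a))"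
    unfolding Pair laurent_eval_expand commutator_def
    by (simp add: sum_distrib_left sum_distrib_right sum_subtractf sc_mult_left sc_mult_right sc_diff)
  ultimately show ?thesis by (simp add: Pair mult_ac)
qed

end

section \<open>From the Rokhlin property to approximately central unitaries\<close>

lemma null_seq_add: "null_seq x \<Longrightarrow> null_seq y \<Longrightarrow> null_seq (\<lambda>n. x n + y n)"
  unfolding null_seq_def using tendsto_add_zero by blast

lemma null_seq_diff: "null_seq x \<Longrightarrow> null_seq y \<Longrightarrow> null_seq (\<lambda>n. x n - y n)"
  unfolding null_seq_def using tendsto_diff[of x 0 _ y 0] by simp

lemma null_seq_swap: "null_seq (\<lambda>n. x n - y n) \<Longrightarrow> null_seq (\<lambda>n. y n - x n)"
  unfolding null_seq_def using tendsto_minus[of "\<lambda>n. x n - y n" 0] by simp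

lemma null_seq_le: "(\<And>n. norm (x n) \<le> b n) \<Longrightarrow> b \<longlonglongrightarrow> 0 \<Longrightarrow> null_seq x"
  unfolding null_seq_def by (rule Lim_null_comparison) auto

lemma null_seq_eventually_less: "null_seq x \<Longrightarrow> r > 0 \<Longrightarrow> eventually (\<lambda>n. norm (x n) < r) sequentially"
  unfolding null_seq_def using order_tendstoD(2)[OF tendsto_norm_zero, of x sequentially r] by auto

lemma bounded_seq_bound:
  assumes "bounded_seq x"
  obtains B where "B > 0" "\<And>n. norm (x n) \<le> B"
proof -
  obtain B where "\<And>n. norm (x n) \<le> B" using assms by (auto simp: bounded_seq_def)
  then show ?thesis using that[of "max B 1"] by (simp add: le_max_iff_disj)
qed

lemma null_seq_mult_bounded:
  fixes x y :: "nat \<Rightarrow> 'a::real_normed_algebra"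
  assumes x: "null_seq x" and y: "bounded_seq y"
  shows "null_seq (\<lambda>n. x n * y n)" and "null_seq (\<lambda>n. y n * x n)"
proof -
  obtain B where B: "\<And>n. norm (y n) \<le> B" using y by (auto simp: bounded_seq_def)
  have lim: "(\<lambda>n. norm (x n) * B) \<longlonglongrightarrow> 0" "(\<lambda>n. B * norm (x n)) \<longlonglongrightarrow> 0"
    using tendsto_mult_left_zero tendsto_mult_right_zero tendsto_norm_zero x
    unfolding null_seq_def by blast+
  show "null_seq (\<lambda>n. x n * y n)"
    by (rule null_seq_le[OF _ lim(1)], rule order_trans[OF norm_mult_ineq]) (simp add: B mult_left_mono)
  show "null_seq (\<lambda>n. y n * x n)"
    by (rule null_seq_le[OF _ lim(2)], rule order_trans[OF norm_mult_ineq]) (simp add: B mult_right_mono)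
qed

lemma uniform_limit_if_equicontinuous:
  fixes g :: "nat \<Rightarrow> 'b::metric_space \<Rightarrow> 'c::metric_space"
  assumes S: "compact S"
    and equi: "\<And>x e. x \<in> S \<Longrightarrow> e > 0 \<Longrightarrow> \<exists>d>0. \<forall>n. \<forall>x'\<in>S. dist x' x < d \<longrightarrow> dist (g n x') (g n x) \<le> e"
    and lim: "\<And>x. x \<in> S \<Longrightarrow> (\<lambda>n. g n x) \<longlonglongrightarrow> l x"
  shows "uniform_limit S g l sequentially"
  unfolding uniform_limit_iff
proof (intro allI impI)
  fix e :: real assume e: "e > 0"
  have "\<forall>x\<in>S. \<exists>d>0. \<forall>n. \<forall>x'\<in>S. dist x' x < d \<longrightarrow> dist (g n x') (g n x) \<le> e / 4"
    using e by (intro ballI equi) simp_all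
  from bchoice[OF this] obtain d where d: "\<And>x. x \<in> S \<Longrightarrow> d x > 0 \<and>
      (\<forall>n. \<forall>x'\<in>S. dist x' x < d x \<longrightarrow> dist (g n x') (g n x) \<le> e / 4)"
    by blast
  obtain T where T: "T \<subseteq> S" "finite T" "S \<subseteq> (\<Union>c\<in>T. ball c (d c))"
  proof (rule compactE_image[OF S, of S "\<lambda>c. ball c (d c)"])
    show "S \<subseteq> (\<Union>c\<in>S. ball c (d c))" using d by fastforce
  qed auto
  have "eventually (\<lambda>n. \<forall>c\<in>T. dist (g n c) (l c) < e / 4) sequentially"
    using T e by (intro eventually_ball_finite ballI tendstoD lim) auto
  then show "eventually (\<lambda>n. \<forall>x\<in>S. dist (g n x) (l x) < e) sequentially"
  proof (rule eventually_mono, intro ballI)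
    fix n x assume near: "\<forall>c\<in>T. dist (g n c) (l c) < e / 4" and x: "x \<in> S"
    then obtain c where c: "c \<in> T" "dist x c < d c" using T by (auto simp: dist_commute)
    then have gc: "dist (g m x) (g m c) \<le> e / 4" for m using d T x by blast
    have "dist (l x) (l c) \<le> e / 4"
      using c T gc by (intro LIMSEQ_le_const2[OF tendsto_dist[OF lim[OF x] lim]]) auto
    moreover have "dist (g n c) (l c) < e / 4" using near c(1) by blast
    ultimately show "dist (g n x) (l x) < e"
      using gc[of n] dist_triangle[of "g n x" "l x" "g n c"] dist_triangle[of "g n c" "l x" "l c"]
        dist_commute[of "l c" "l x"] e by linarith
  qed
qed

context unital_cstar
begin

lemma circle_action_hom:
  "circle_action sc st \<alpha> \<Longrightarrow> \<zeta> \<in> sphere 0 1 \<Longrightarrow> unital_star_hom (\<alpha> \<zeta>)"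
  by (simp add: circle_action_def star_aut_imp_unital_star_hom)

text \<open>The image of \<open>conj\<close> under the Rokhlin map; \<open>conj\<close> rather than the identity because of
  the convention $\mathtt{Lt}_\zeta f = f(\bar\zeta\,\cdot)$.\<close>
lemma null_seq_almost_unitary:
  assumes bx: "bounded_seq x" and y: "null_seq (\<lambda>n. st (x n) - y n)"
    and yx: "null_seq (\<lambda>n. y n * x n - 1)" and xy: "null_seq (\<lambda>n. x n * y n - 1)"
  shows "null_seq (\<lambda>n. st (x n) * x n - 1)" and "null_seq (\<lambda>n. x n * st (x n) - 1)"
proof -
  have "null_seq (\<lambda>n. (st (x n) - y n) * x n + (y n * x n - 1))"
    and "null_seq (\<lambda>n. x n * (st (x n) - y n) + (x n * y n - 1))"
    by (intro null_seq_add null_seq_mult_bounded[OF y bx] yx xy)+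
  then show "null_seq (\<lambda>n. st (x n) * x n - 1)" and "null_seq (\<lambda>n. x n * st (x n) - 1)"
    by (simp_all add: algebra_simps)
qed

lemma rokhlin_central_sequence:
  assumes R: "rokhlin_circle sc st \<alpha>"
  obtains x where "bounded_seq x" "alpha_cont_seq \<alpha> x"
    "null_seq (\<lambda>n. st (x n) * x n - 1)" "null_seq (\<lambda>n. x n * st (x n) - 1)"
    "\<And>a. null_seq (\<lambda>n. a * x n - x n * a)"
    "\<And>\<zeta>. \<zeta> \<in> sphere 0 1 \<Longrightarrow> null_seq (\<lambda>n. \<alpha> \<zeta> (x n) - sc \<zeta> (x n))"
proof -
  let ?C = "{f::complex \<Rightarrow> complex. continuous_on (sphere 0 1) f}"
  obtain \<Phi> :: "(complex \<Rightarrow> complex) \<Rightarrow> nat \<Rightarrow> 'a" where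
    bd: "\<forall>f\<in>?C. bounded_seq (\<Phi> f) \<and> alpha_cont_seq \<alpha> (\<Phi> f)" and
    ext: "\<forall>f\<in>?C. \<forall>g\<in>?C. (\<forall>z\<in>sphere 0 1. f z = g z) \<longrightarrow> null_seq (\<lambda>n. \<Phi> f n - \<Phi> g n)" and
    scal: "\<forall>f\<in>?C. \<forall>c. null_seq (\<lambda>n. \<Phi> (\<lambda>z. c * f z) n - sc c (\<Phi> f n))" and
    mult: "\<forall>f\<in>?C. \<forall>g\<in>?C. null_seq (\<lambda>n. \<Phi> (\<lambda>z. f z * g z) n - \<Phi> f n * \<Phi> g n)" and
    star: "\<forall>f\<in>?C. null_seq (\<lambda>n. \<Phi> (\<lambda>z. cnj (f z)) n - st (\<Phi> f n))" and
    one: "null_seq (\<lambda>n. \<Phi> (\<lambda>z. 1) n - 1)" and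
    central: "\<forall>f\<in>?C. \<forall>a. null_seq (\<lambda>n. \<Phi> f n * a - a * \<Phi> f n)" and
    equiv: "\<forall>f\<in>?C. \<forall>\<zeta>\<in>sphere 0 1. null_seq (\<lambda>n. \<alpha> \<zeta> (\<Phi> f n) - \<Phi> (\<lambda>z. f (cnj \<zeta> * z)) n)"
    using R unfolding rokhlin_circle_def Let_def by blast
  have C: "(\<lambda>z. cnj z) \<in> ?C" "(\<lambda>z. z) \<in> ?C" "(\<lambda>z. 1) \<in> ?C" "(\<lambda>z. z * cnj z) \<in> ?C"
    "(\<lambda>z. cnj z * z) \<in> ?C"
    by (simp_all add: continuous_intros)
  have unit: "z * cnj z = 1" "cnj z * z = 1" if "z \<in> sphere 0 1" for z
    using that complex_norm_square[of z] by (simp_all add: mult.commute)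
  define x where "x = \<Phi> (\<lambda>z. cnj z)"
  define y where "y = \<Phi> (\<lambda>z. z)"
  have bx: "bounded_seq x" and cx: "alpha_cont_seq \<alpha> x"
    using bspec[OF bd C(1)] by (simp_all add: x_def)
  have y: "null_seq (\<lambda>n. st (x n) - y n)"
    using null_seq_swap[OF bspec[OF star C(1)]] by (simp add: x_def y_def)
  have yx: "null_seq (\<lambda>n. y n * x n - \<Phi> (\<lambda>z. z * cnj z) n)"
    and xy: "null_seq (\<lambda>n. x n * y n - \<Phi> (\<lambda>z. cnj z * z) n)"
    using null_seq_swap[OF mult[rule_format, OF C(2) C(1)]] null_seq_swap[OF mult[rule_format, OF C(1) C(2)]]
    by (simp_all add: x_def y_def)
  have "null_seq (\<lambda>n. (y n * x n - \<Phi> (\<lambda>z. z * cnj z) n) + (\<Phi> (\<lambda>z. z * cnj z) n - \<Phi> (\<lambda>z. 1) n) +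
      (\<Phi> (\<lambda>z. 1) n - 1))"
    by (intro null_seq_add yx one ext[rule_format] C(3,4) unit(1))
  moreover have "null_seq (\<lambda>n. (x n * y n - \<Phi> (\<lambda>z. cnj z * z) n) + (\<Phi> (\<lambda>z. cnj z * z) n - \<Phi> (\<lambda>z. 1) n) +
      (\<Phi> (\<lambda>z. 1) n - 1))"
    by (intro null_seq_add xy one ext[rule_format] C(3,5) unit(2))
  ultimately have l: "null_seq (\<lambda>n. st (x n) * x n - 1)" and r: "null_seq (\<lambda>n. x n * st (x n) - 1)"
    by (simp_all add: null_seq_almost_unitary[OF bx y])
  have "null_seq (\<lambda>n. a * x n - x n * a)" for a
    using null_seq_swap[OF central[rule_format, OF C(1)]] by (simp add: x_def)
  moreover have "null_seq (\<lambda>n. \<alpha> \<zeta> (x n) - sc \<zeta> (x n))" if "\<zeta> \<in> sphere 0 1" for \<zeta>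
    using null_seq_add[OF equiv[rule_format, OF C(1) that] spec[OF bspec[OF scal C(1)], of \<zeta>]]
    by (simp add: x_def)
  ultimately show ?thesis by (rule that[OF bx cx l r])
qed

lemma uniform_limit_alpha_minus_sc:
  assumes ca: "circle_action sc st \<alpha>" and bx: "bounded_seq x" and cx: "alpha_cont_seq \<alpha> x"
    and pw: "\<And>\<zeta>. \<zeta> \<in> sphere 0 1 \<Longrightarrow> null_seq (\<lambda>n. \<alpha> \<zeta> (x n) - sc \<zeta> (x n))"
  shows "uniform_limit (sphere 0 1) (\<lambda>n \<zeta>. \<alpha> \<zeta> (x n) - sc \<zeta> (x n)) (\<lambda>_. 0) sequentially"
proof (rule uniform_limit_if_equicontinuous)
  fix \<zeta>0 :: complex and e :: real assume \<zeta>0: "\<zeta>0 \<in> sphere 0 1" and e: "e > 0"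
  obtain B where B: "B > 0" "\<And>n. norm (x n) \<le> B" using bounded_seq_bound[OF bx] by blast
  have "\<exists>d>0. \<forall>\<zeta>\<in>sphere 0 1. cmod (\<zeta> - \<zeta>0) < d \<longrightarrow> (\<forall>n. norm (\<alpha> \<zeta> (x n) - \<alpha> \<zeta>0 (x n)) \<le> e / 2)"
    using cx \<zeta>0 half_gt_zero[OF e] unfolding alpha_cont_seq_def by blast
  then obtain d where d: "d > 0" and
    dh: "\<And>\<zeta> n. \<zeta> \<in> sphere 0 1 \<Longrightarrow> cmod (\<zeta> - \<zeta>0) < d \<Longrightarrow> norm (\<alpha> \<zeta> (x n) - \<alpha> \<zeta>0 (x n)) \<le> e / 2"
    by blast
  show "\<exists>d>0. \<forall>n. \<forall>\<zeta>\<in>sphere 0 1. dist \<zeta> \<zeta>0 < d \<longrightarrow>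
      dist (\<alpha> \<zeta> (x n) - sc \<zeta> (x n)) (\<alpha> \<zeta>0 (x n) - sc \<zeta>0 (x n)) \<le> e"
  proof (intro exI[of _ "min d (e / (2 * B))"] conjI allI ballI impI)
    fix n \<zeta> assume \<zeta>: "\<zeta> \<in> sphere 0 1" and near: "dist \<zeta> \<zeta>0 < min d (e / (2 * B))"
    have "norm (sc \<zeta>0 (x n) - sc \<zeta> (x n)) = cmod (\<zeta> - \<zeta>0) * norm (x n)"
      by (simp add: sc_diff_left[symmetric] norm_sc norm_minus_commute)
    also have "\<dots> \<le> e / (2 * B) * B"
      using near B e by (intro mult_mono) (simp_all add: dist_norm)
    finally have "norm (sc \<zeta>0 (x n) - sc \<zeta> (x n)) \<le> e / 2" using B by simp
    moreover have "norm (\<alpha> \<zeta> (x n) - \<alpha> \<zeta>0 (x n)) \<le> e / 2"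
      using dh \<zeta> near by (simp add: dist_norm)
    ultimately show "dist (\<alpha> \<zeta> (x n) - sc \<zeta> (x n)) (\<alpha> \<zeta>0 (x n) - sc \<zeta>0 (x n)) \<le> e"
      using norm_triangle_ineq[of "\<alpha> \<zeta> (x n) - \<alpha> \<zeta>0 (x n)" "sc \<zeta>0 (x n) - sc \<zeta> (x n)"]
      by (simp add: dist_norm algebra_simps)
  qed (use d e B in auto)
qed (use pw in \<open>simp_all add: null_seq_def\<close>)

lemma unitaries_near_almost_unitaries:
  assumes bx: "bounded_seq x"
    and l: "null_seq (\<lambda>n. st (x n) * x n - 1)" and r: "null_seq (\<lambda>n. x n * st (x n) - 1)"
  obtains u where "\<And>n. unitary (u n)" "null_seq (\<lambda>n. u n - x n)"
proof -
  obtain B where B: "B > 0" "\<And>n. norm (x n) \<le> B" using bounded_seq_bound[OF bx] by blast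
  let ?small = "\<lambda>n. norm (1 - st (x n) * x n) < 1/2 \<and> norm (1 - x n * st (x n)) < 1"
  have "\<forall>n. \<exists>u. unitary u \<and> (?small n \<longrightarrow> norm (u - x n) \<le> 2 * B * norm (1 - st (x n) * x n))"
  proof
    fix n
    show "\<exists>u. unitary u \<and> (?small n \<longrightarrow> norm (u - x n) \<le> 2 * B * norm (1 - st (x n) * x n))"
    proof (cases "?small n")
      case True
      then obtain u where "unitary u" "norm (u - x n) \<le> 2 * norm (x n) * norm (1 - st (x n) * x n)"
        using exists_unitary_near by blast
      moreover have "2 * norm (x n) * norm (1 - st (x n) * x n) \<le> 2 * B * norm (1 - st (x n) * x n)"
        using B by (simp add: mult_right_mono)
      ultimately show ?thesis by fastforce
    qed (auto intro!: exI[of _ 1] simp: unitary_el_def)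
  qed
  from choice[OF this] obtain u where u: "\<And>n. unitary (u n)"
    and near: "\<And>n. ?small n \<Longrightarrow> norm (u n - x n) \<le> 2 * B * norm (1 - st (x n) * x n)"
    by blast
  have "eventually (\<lambda>n. norm (st (x n) * x n - 1) < 1/2) sequentially"
    by (rule null_seq_eventually_less[OF l]) simp
  moreover have "eventually (\<lambda>n. norm (x n * st (x n) - 1) < 1) sequentially"
    by (rule null_seq_eventually_less[OF r]) simp
  ultimately have "eventually ?small sequentially"
    by eventually_elim (simp add: norm_minus_commute)
  then have "eventually (\<lambda>n. norm (u n - x n) \<le> 2 * B * norm (st (x n) * x n - 1)) sequentially"
    by eventually_elim (simp add: near norm_minus_commute)
  then have "null_seq (\<lambda>n. u n - x n)"
    unfolding null_seq_def
    by (rule Lim_null_comparison)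
      (rule tendsto_mult_right_zero[OF tendsto_norm_zero[OF l[unfolded null_seq_def]]])
  then show ?thesis using that u by blast
qed

lemma uniform_limit_alpha_minus_sc_perturb:
  assumes ca: "circle_action sc st \<alpha>"
    and x: "uniform_limit (sphere 0 1) (\<lambda>n \<zeta>. \<alpha> \<zeta> (x n) - sc \<zeta> (x n)) (\<lambda>_. 0) sequentially"
    and ux: "null_seq (\<lambda>n. u n - x n)"
  shows "uniform_limit (sphere 0 1) (\<lambda>n \<zeta>. \<alpha> \<zeta> (u n) - sc \<zeta> (u n)) (\<lambda>_. 0) sequentially"
proof (rule uniform_limitI)
  fix e :: real assume e: "e > 0"
  have "eventually (\<lambda>n. \<forall>\<zeta>\<in>sphere 0 1. norm (\<alpha> \<zeta> (x n) - sc \<zeta> (x n)) < e / 2) sequentially"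
    using uniform_limitD[OF x, of "e / 2"] e by (simp add: dist_norm)
  moreover have "eventually (\<lambda>n. norm (u n - x n) < e / 4) sequentially"
    using e by (intro null_seq_eventually_less[OF ux]) simp
  ultimately show "eventually (\<lambda>n. \<forall>\<zeta>\<in>sphere 0 1. dist (\<alpha> \<zeta> (u n) - sc \<zeta> (u n)) 0 < e) sequentially"
  proof eventually_elim
    case (elim n)
    show ?case
    proof
      fix \<zeta> :: complex assume \<zeta>: "\<zeta> \<in> sphere 0 1"
      have eq: "\<alpha> \<zeta> (u n) - sc \<zeta> (u n) =
          \<alpha> \<zeta> (u n - x n) + (\<alpha> \<zeta> (x n) - sc \<zeta> (x n)) + sc \<zeta> (x n - u n)"
        by (simp add: hom_diff[OF circle_action_hom[OF ca \<zeta>]] sc_diff)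
      have "norm (\<alpha> \<zeta> (u n) - sc \<zeta> (u n)) \<le>
          norm (\<alpha> \<zeta> (u n - x n)) + norm (\<alpha> \<zeta> (x n) - sc \<zeta> (x n)) + norm (sc \<zeta> (x n - u n))"
        unfolding eq by (intro order_trans[OF norm_triangle_ineq] add_right_mono norm_triangle_ineq)
      moreover have "norm (\<alpha> \<zeta> (u n - x n)) \<le> norm (u n - x n)"
        by (rule norm_hom_le[OF circle_action_hom[OF ca \<zeta>]])
      moreover have "norm (sc \<zeta> (x n - u n)) = norm (u n - x n)"
        using \<zeta> by (simp add: norm_sc norm_minus_commute)
      moreover have "norm (\<alpha> \<zeta> (x n) - sc \<zeta> (x n)) < e / 2"
        using elim(1) \<zeta> by blast
      ultimately show "dist (\<alpha> \<zeta> (u n) - sc \<zeta> (u n)) 0 < e"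
        using elim(2) unfolding dist_norm diff_zero by linarith
    qed
  qed
qed

lemma rokhlin_central_unitaries:
  assumes ca: "circle_action sc st \<alpha>" and R: "rokhlin_circle sc st \<alpha>"
  obtains u where "\<And>n. unitary (u n)" "\<And>a. null_seq (\<lambda>n. a * u n - u n * a)"
    "uniform_limit (sphere 0 1) (\<lambda>n \<zeta>. \<alpha> \<zeta> (u n) - sc \<zeta> (u n)) (\<lambda>_. 0) sequentially"
proof -
  obtain x where bx: "bounded_seq x" and cx: "alpha_cont_seq \<alpha> x"
    and l: "null_seq (\<lambda>n. st (x n) * x n - 1)" and r: "null_seq (\<lambda>n. x n * st (x n) - 1)"
    and comm: "\<And>a. null_seq (\<lambda>n. a * x n - x n * a)"
    and pw: "\<And>\<zeta>. \<zeta> \<in> sphere 0 1 \<Longrightarrow> null_seq (\<lambda>n. \<alpha> \<zeta> (x n) - sc \<zeta> (x n))"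
    using rokhlin_central_sequence[OF R] by blast
  obtain u where u: "\<And>n. unitary (u n)" and ux: "null_seq (\<lambda>n. u n - x n)"
    using unitaries_near_almost_unitaries[OF bx l r] by blast
  have "null_seq (\<lambda>n. (a * x n - x n * a) + a * (u n - x n) - (u n - x n) * a)" for a
  proof -
    have "bounded_seq (\<lambda>n. a)" by (auto simp: bounded_seq_def)
    then show ?thesis
      by (intro null_seq_diff null_seq_add comm null_seq_mult_bounded ux)
  qed
  then have "null_seq (\<lambda>n. a * u n - u n * a)" for a
    by (simp add: algebra_simps)
  then show ?thesis
    using that u uniform_limit_alpha_minus_sc_perturb[OF ca uniform_limit_alpha_minus_sc[OF ca bx cx pw] ux]
    by blast
qed

lemma rokhlin_imp_approx_unitaries:
  assumes ca: "circle_action sc st \<alpha>" and R: "rokhlin_circle sc st \<alpha>"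
    and F: "finite F" and e: "\<epsilon> > 0"
  shows "\<exists>u. unitary u \<and> (\<forall>\<zeta>\<in>sphere 0 1. norm (\<alpha> \<zeta> u - sc \<zeta> u) < \<epsilon>) \<and>
    (\<forall>a\<in>F. norm (a * u - u * a) < \<epsilon>)"
proof -
  obtain u where u: "\<And>n. unitary (u n)" and comm: "\<And>a. null_seq (\<lambda>n. a * u n - u n * a)"
    and unif: "uniform_limit (sphere 0 1) (\<lambda>n \<zeta>. \<alpha> \<zeta> (u n) - sc \<zeta> (u n)) (\<lambda>_. 0) sequentially"
    using rokhlin_central_unitaries[OF ca R] by blast
  have "eventually (\<lambda>n. \<forall>\<zeta>\<in>sphere 0 1. norm (\<alpha> \<zeta> (u n) - sc \<zeta> (u n)) < \<epsilon>) sequentially"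
    using uniform_limitD[OF unif e] by (simp add: dist_norm)
  moreover have "eventually (\<lambda>n. \<forall>a\<in>F. norm (a * u n - u n * a) < \<epsilon>) sequentially"
    using F e by (intro eventually_ball_finite ballI null_seq_eventually_less comm)
  ultimately have "eventually (\<lambda>n. (\<forall>\<zeta>\<in>sphere 0 1. norm (\<alpha> \<zeta> (u n) - sc \<zeta> (u n)) < \<epsilon>) \<and>
      (\<forall>a\<in>F. norm (a * u n - u n * a) < \<epsilon>)) sequentially"
    by (rule eventually_conj)
  then obtain n where "(\<forall>\<zeta>\<in>sphere 0 1. norm (\<alpha> \<zeta> (u n) - sc \<zeta> (u n)) < \<epsilon>) \<and>
      (\<forall>a\<in>F. norm (a * u n - u n * a) < \<epsilon>)"
    unfolding eventually_sequentially by blast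
  then show ?thesis using u by blast
qed

end

section \<open>Approximating continuous functions on the circle by Laurent polynomials\<close>

lemma laurent_of_linear:
  assumes "bounded_linear (h :: complex \<Rightarrow> real)"
  obtains R where "\<And>z. cmod z = 1 \<Longrightarrow> complex_of_real (h z) = laurent_fun R z"
proof
  define a where "a = (complex_of_real (h 1) - \<i> * complex_of_real (h \<i>)) / 2"
  define b where "b = (complex_of_real (h 1) + \<i> * complex_of_real (h \<i>)) / 2"
  fix z :: complex assume z: "cmod z = 1"
  have "Re z *\<^sub>R 1 + Im z *\<^sub>R \<i> = z" by (simp add: complex_eq_iff)
  then have "h z = h (Re z *\<^sub>R 1 + Im z *\<^sub>R \<i>)" by simp
  also have "\<dots> = Re z * h 1 + Im z * h \<i>"
    using bounded_linear.linear[OF assms] by (simp add: linear_add linear_scale)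
  finally have "complex_of_real (h z) = a * z + b * cnj z"
    by (simp add: complex_eq_iff a_def b_def field_simps)
  also have "\<dots> = laurent_fun (laurent_add (laurent_smult a ([:0, 1:], 0)) (laurent_smult b (1, 1))) z"
    using z by (simp only: laurent_fun_add_circle laurent_fun_smult) (simp add: cnj_unit_circle)
  finally show "complex_of_real (h z) = \<dots>" .
qed

lemma laurent_of_real_polynomial_function:
  assumes "real_polynomial_function (h :: complex \<Rightarrow> real)"
  obtains R where "\<And>z. cmod z = 1 \<Longrightarrow> complex_of_real (h z) = laurent_fun R z"
  using assms
proof (induction h arbitrary: thesis rule: real_polynomial_function.induct)
  case (linear h)
  then show ?case using laurent_of_linear by blast
next
  case (const c)
  show ?case by (rule const.prems[of "([:complex_of_real c:], 0)"]) simp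
next
  case (add f g)
  obtain R S where "\<And>z. cmod z = 1 \<Longrightarrow> complex_of_real (f z) = laurent_fun R z"
    and "\<And>z. cmod z = 1 \<Longrightarrow> complex_of_real (g z) = laurent_fun S z"
    using add.IH by metis
  then show ?case
    by (intro add.prems[of "laurent_add R S"]) (simp add: laurent_fun_add_circle)
next
  case (mult f g)
  obtain R S where "\<And>z. cmod z = 1 \<Longrightarrow> complex_of_real (f z) = laurent_fun R z"
    and "\<And>z. cmod z = 1 \<Longrightarrow> complex_of_real (g z) = laurent_fun S z"
    using mult.IH by metis
  then show ?case
    by (intro mult.prems[of "laurent_mult R S"]) (auto simp: laurent_fun_mult)
qed

lemma laurent_of_polynomial_function:
  assumes g: "polynomial_function (g :: complex \<Rightarrow> complex)"
  obtains R where "\<And>z. cmod z = 1 \<Longrightarrow> g z = laurent_fun R z"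
proof -
  have "real_polynomial_function (\<lambda>z. Re (g z))" "real_polynomial_function (\<lambda>z. Im (g z))"
    using g bounded_linear_Re bounded_linear_Im unfolding polynomial_function_def o_def by blast+
  then obtain R S where R: "\<And>z. cmod z = 1 \<Longrightarrow> complex_of_real (Re (g z)) = laurent_fun R z"
    and S: "\<And>z. cmod z = 1 \<Longrightarrow> complex_of_real (Im (g z)) = laurent_fun S z"
    by (metis laurent_of_real_polynomial_function)
  have "g z = laurent_fun (laurent_add R (laurent_smult \<i> S)) z" if z: "cmod z = 1" for z
  proof -
    have "g z = complex_of_real (Re (g z)) + \<i> * complex_of_real (Im (g z))" by (rule complex_eq)
    also have "\<dots> = laurent_fun R z + \<i> * laurent_fun S z" by (simp only: R[OF z] S[OF z])
    finally show ?thesis using z by (simp add: laurent_fun_add_circle laurent_fun_smult)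
  qed
  then show ?thesis using that by blast
qed

lemma laurent_dense:
  assumes f: "continuous_on (sphere 0 1) f" and e: "e > 0"
  obtains R where "\<forall>z\<in>sphere 0 1. cmod (f z - laurent_fun R z) < e"
proof -
  obtain g :: "complex \<Rightarrow> complex" where g: "polynomial_function g"
    and ge: "\<forall>z\<in>sphere 0 1. norm (f z - g z) < e"
    using Stone_Weierstrass_polynomial_function[OF compact_sphere f e] by blast
  obtain R where "\<And>z. cmod z = 1 \<Longrightarrow> g z = laurent_fun R z"
    using laurent_of_polynomial_function[OF g] by blast
  then show ?thesis using ge that by auto
qed

text \<open>The $n$-th approximant of $f$ is a near-best approximation among the Laurent polynomials
  $P(z)/z^D$ with $D \le n$ and $\deg P \le 2n$, so that its Lipschitz constant is $O(n^2)$.\<close>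
definition laurent_window :: "nat \<Rightarrow> laurent set" where
  "laurent_window n = {(P, D). D \<le> n \<and> degree P \<le> 2 * n}"

lemma laurent_window_eventually: "\<exists>N. \<forall>n\<ge>N. R \<in> laurent_window n"
  by (cases R) (rule exI[of _ "max (snd R) (degree (fst R))"], auto simp: laurent_window_def)

lemma laurent_lip_window_le: "R \<in> laurent_window n \<Longrightarrow> laurent_lip R \<le> 6 * (real n + 1)\<^sup>2"
proof (cases R)
  case (Pair P D)
  assume "R \<in> laurent_window n"
  then have d: "real D \<le> real n" "real (degree P) \<le> 2 * real n"
    by (auto simp: laurent_window_def Pair)
  have "laurent_lip R \<le> (2 * real n + 1) * (3 * real n)"
    using d by (simp add: Pair) (intro mult_mono; linarith)
  also have "\<dots> \<le> 6 * (real n + 1)\<^sup>2" by (simp add: power2_eq_square algebra_simps)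
  finally show ?thesis .
qed

definition window_errors :: "(complex \<Rightarrow> complex) \<Rightarrow> nat \<Rightarrow> real set" where
  "window_errors f n = {e. \<exists>R\<in>laurent_window n. \<forall>z\<in>sphere 0 1. cmod (f z - laurent_fun R z) \<le> e}"

definition approx_error :: "(complex \<Rightarrow> complex) \<Rightarrow> nat \<Rightarrow> real" where
  "approx_error f n = Inf (window_errors f n) + 1 / (real n + 1)"

definition approximant :: "(complex \<Rightarrow> complex) \<Rightarrow> nat \<Rightarrow> laurent" where
  "approximant f n = (SOME R. R \<in> laurent_window n \<and>
     (\<forall>z\<in>sphere 0 1. cmod (f z - laurent_fun R z) \<le> approx_error f n))"

lemma bounded_on_circle:
  assumes "continuous_on (sphere 0 1) (f :: complex \<Rightarrow> complex)"
  obtains M where "M \<ge> 0" "\<And>z. cmod z = 1 \<Longrightarrow> cmod (f z) \<le> M"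
proof -
  obtain M where "\<forall>y\<in>f ` sphere 0 1. norm y \<le> M"
    using compact_imp_bounded[OF compact_continuous_image[OF assms compact_sphere]]
    by (auto simp: bounded_iff)
  then show ?thesis using that[of "max M 0"] by (auto simp: le_max_iff_disj)
qed

lemma window_errors_nonneg:
  assumes "e \<in> window_errors f n"
  shows "e \<ge> 0"
proof -
  obtain R where "\<forall>z\<in>sphere 0 1. cmod (f z - laurent_fun R z) \<le> e"
    using assms by (auto simp: window_errors_def)
  then have "cmod (f 1 - laurent_fun R 1) \<le> e" by simp
  then show ?thesis using norm_ge_zero[of "f 1 - laurent_fun R 1"] by linarith
qed

lemma window_errors_nonempty:
  assumes "continuous_on (sphere 0 1) f"
  shows "window_errors f n \<noteq> {}"
proof -
  obtain M where "\<And>z. cmod z = 1 \<Longrightarrow> cmod (f z) \<le> M" using bounded_on_circle[OF assms] by blast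
  moreover have "(0, 0) \<in> laurent_window n" by (simp add: laurent_window_def)
  ultimately have "M \<in> window_errors f n" by (force simp: window_errors_def)
  then show ?thesis by blast
qed

lemma approx_error_nonneg:
  assumes "continuous_on (sphere 0 1) f"
  shows "approx_error f n \<ge> 0"
proof -
  have "Inf (window_errors f n) \<ge> 0"
    using window_errors_nonempty[OF assms] by (intro cInf_greatest window_errors_nonneg)
  then show ?thesis by (simp add: approx_error_def)
qed

lemma approximant:
  assumes f: "continuous_on (sphere 0 1) f"
  shows "approximant f n \<in> laurent_window n"
    and "\<And>z. cmod z = 1 \<Longrightarrow> cmod (f z - laurent_fun (approximant f n) z) \<le> approx_error f n"
proof -
  have "Inf (window_errors f n) < approx_error f n" by (simp add: approx_error_def)
  then obtain e where "e \<in> window_errors f n" "e < approx_error f n"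
    using cInf_lessD[OF window_errors_nonempty[OF f]] by blast
  then have "\<exists>R. R \<in> laurent_window n \<and>
      (\<forall>z\<in>sphere 0 1. cmod (f z - laurent_fun R z) \<le> approx_error f n)"
    unfolding window_errors_def by (force intro: order_trans)
  from someI_ex[OF this]
  show "approximant f n \<in> laurent_window n"
    and "\<And>z. cmod z = 1 \<Longrightarrow> cmod (f z - laurent_fun (approximant f n) z) \<le> approx_error f n"
    unfolding approximant_def by simp_all
qed

lemma inverse_succ_tendsto_0: "(\<lambda>n. C / (real n + 1)) \<longlonglongrightarrow> 0"
  using tendsto_mult_right_zero[OF LIMSEQ_inverse_real_of_nat, of C]
  by (simp add: divide_inverse add.commute)

lemma approx_error_tendsto_0:
  assumes f: "continuous_on (sphere 0 1) f"
  shows "approx_error f \<longlonglongrightarrow> 0"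
proof -
  have "(\<lambda>n. Inf (window_errors f n)) \<longlonglongrightarrow> 0"
  proof (rule LIMSEQ_I)
    fix r :: real assume r: "r > 0"
    obtain R where R: "\<forall>z\<in>sphere 0 1. cmod (f z - laurent_fun R z) < r / 2"
      using laurent_dense[OF f, of "r / 2"] r by auto
    obtain N where N: "\<forall>n\<ge>N. R \<in> laurent_window n" using laurent_window_eventually by blast
    have "norm (Inf (window_errors f n) - 0) < r" if "n \<ge> N" for n
    proof -
      have "r / 2 \<in> window_errors f n"
        using N that R by (force simp: window_errors_def intro: less_imp_le)
      then have "Inf (window_errors f n) \<le> r / 2"
        by (intro cInf_lower) (auto intro: bdd_belowI window_errors_nonneg)
      moreover have "Inf (window_errors f n) \<ge> 0"
        using window_errors_nonempty[OF f] by (intro cInf_greatest window_errors_nonneg)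
      ultimately show ?thesis using r by simp
    qed
    then show "\<exists>N. \<forall>n\<ge>N. norm (Inf (window_errors f n) - 0) < r" by blast
  qed
  then show ?thesis
    unfolding approx_error_def[abs_def] by (rule tendsto_add_zero[OF _ inverse_succ_tendsto_0])
qed

definition approx_bound :: "(complex \<Rightarrow> complex) \<Rightarrow> real" where
  "approx_bound f = (SOME K. K \<ge> 0 \<and> (\<forall>z. cmod z = 1 \<longrightarrow>
     cmod (f z) \<le> K \<and> (\<forall>n. cmod (laurent_fun (approximant f n) z) \<le> K)))"

lemma approx_bound:
  assumes f: "continuous_on (sphere 0 1) f"
  shows "approx_bound f \<ge> 0"
    and "\<And>z. cmod z = 1 \<Longrightarrow> cmod (f z) \<le> approx_bound f"
    and "\<And>z. cmod z = 1 \<Longrightarrow> cmod (laurent_fun (approximant f n) z) \<le> approx_bound f"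
proof -
  obtain M where M: "M \<ge> 0" "\<And>z. cmod z = 1 \<Longrightarrow> cmod (f z) \<le> M"
    using bounded_on_circle[OF f] by blast
  obtain E where "\<And>n. norm (approx_error f n) \<le> E"
    using convergent_imp_Bseq[OF convergentI[OF approx_error_tendsto_0[OF f]]] by (auto simp: Bseq_def)
  then have E: "\<And>n. approx_error f n \<le> E" by (simp add: abs_le_iff)
  have E0: "E \<ge> 0" using E[of 0] approx_error_nonneg[OF f, of 0] by linarith
  have "cmod (laurent_fun (approximant f n) z) \<le> M + E" if "cmod z = 1" for n z
    using norm_triangle_ineq4[of "f z" "f z - laurent_fun (approximant f n) z"]
      approximant(2)[OF f that, of n] M(2)[OF that] E[of n] by simp
  moreover have "cmod (f z) \<le> M + E" if "cmod z = 1" for z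
    using M(2)[OF that] E0 by linarith
  ultimately have "\<exists>K. K \<ge> 0 \<and> (\<forall>z. cmod z = 1 \<longrightarrow>
      cmod (f z) \<le> K \<and> (\<forall>n. cmod (laurent_fun (approximant f n) z) \<le> K))"
    using M(1) E0 by (intro exI[of _ "M + E"]) simp
  from someI_ex[OF this]
  show "approx_bound f \<ge> 0"
    and "\<And>z. cmod z = 1 \<Longrightarrow> cmod (f z) \<le> approx_bound f"
    and "\<And>z. cmod z = 1 \<Longrightarrow> cmod (laurent_fun (approximant f n) z) \<le> approx_bound f"
    unfolding approx_bound_def by auto
qed

lemma weighted_lip_bound:
  assumes "continuous_on (sphere 0 1) f"
  shows "laurent_lip (approximant f n) * approx_bound f * (1 / (real n + 1) ^ 3)
    \<le> 6 * approx_bound f / (real n + 1)"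
proof -
  have "laurent_lip (approximant f n) * approx_bound f \<le> 6 * (real n + 1)\<^sup>2 * approx_bound f"
    by (intro mult_right_mono laurent_lip_window_le approximant(1) approx_bound(1) assms)
  then have "laurent_lip (approximant f n) * approx_bound f * (1 / (real n + 1) ^ 3)
      \<le> 6 * (real n + 1)\<^sup>2 * approx_bound f * (1 / (real n + 1) ^ 3)"
    by (rule mult_right_mono) simp
  also have "\<dots> = 6 * approx_bound f / (real n + 1)"
  proof -
    have "6 * t\<^sup>2 * K * (1 / t ^ 3) = 6 * K / t" if "t > 0" for t K :: real
      using that by (simp add: power2_eq_square power3_eq_cube field_simps)
    then show ?thesis by simp
  qed
  finally show ?thesis .
qed

section \<open>A Rokhlin map built from approximately central unitaries\<close>

lemma norm_add_diff_le: "norm (a + b - c) \<le> norm a + norm b + norm (c :: 'a::real_normed_vector)"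
  using norm_triangle_ineq4[of "a + b" c] norm_triangle_ineq[of a b] by linarith

lemma alpha_cont_seq_if_eventually_equicontinuous:
  assumes cont: "\<And>n. continuous_on (sphere 0 1) (\<lambda>\<zeta>. \<alpha> \<zeta> (x n))"
    and tail: "\<And>\<zeta>0 e. \<zeta>0 \<in> sphere 0 1 \<Longrightarrow> e > 0 \<Longrightarrow> \<exists>d>0. \<exists>N. \<forall>n\<ge>N. \<forall>\<zeta>\<in>sphere 0 1.
      cmod (\<zeta> - \<zeta>0) < d \<longrightarrow> norm (\<alpha> \<zeta> (x n) - \<alpha> \<zeta>0 (x n)) \<le> e"
  shows "alpha_cont_seq \<alpha> x"
  unfolding alpha_cont_seq_def
proof (intro ballI allI impI)
  fix \<zeta>0 :: complex and e :: real assume \<zeta>0: "\<zeta>0 \<in> sphere 0 1" and e: "e > 0"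
  obtain d1 N where d1: "d1 > 0" and late: "\<And>n \<zeta>. n \<ge> N \<Longrightarrow> \<zeta> \<in> sphere 0 1 \<Longrightarrow>
      cmod (\<zeta> - \<zeta>0) < d1 \<Longrightarrow> norm (\<alpha> \<zeta> (x n) - \<alpha> \<zeta>0 (x n)) \<le> e"
    using tail[OF \<zeta>0 e] by blast
  have "eventually (\<lambda>\<zeta>. \<forall>n\<in>{..<N}. dist (\<alpha> \<zeta> (x n)) (\<alpha> \<zeta>0 (x n)) < e) (at \<zeta>0 within sphere 0 1)"
    using cont \<zeta>0 e by (intro eventually_ball_finite ballI tendstoD) (auto simp: continuous_on_def)
  then obtain d2 where d2: "d2 > 0" and early: "\<And>\<zeta>. \<zeta> \<in> sphere 0 1 \<Longrightarrow> \<zeta> \<noteq> \<zeta>0 \<Longrightarrow>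
      dist \<zeta> \<zeta>0 < d2 \<Longrightarrow> \<forall>n\<in>{..<N}. dist (\<alpha> \<zeta> (x n)) (\<alpha> \<zeta>0 (x n)) < e"
    unfolding eventually_at by blast
  show "\<exists>d>0. \<forall>\<zeta>\<in>sphere 0 1. cmod (\<zeta> - \<zeta>0) < d \<longrightarrow> (\<forall>n. norm (\<alpha> \<zeta> (x n) - \<alpha> \<zeta>0 (x n)) \<le> e)"
  proof (intro exI[of _ "min d1 d2"] conjI ballI impI allI)
    fix \<zeta> n assume \<zeta>: "\<zeta> \<in> sphere 0 1" and near: "cmod (\<zeta> - \<zeta>0) < min d1 d2"
    show "norm (\<alpha> \<zeta> (x n) - \<alpha> \<zeta>0 (x n)) \<le> e"
    proof (cases "n < N \<and> \<zeta> \<noteq> \<zeta>0")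
      case True
      then have "\<forall>m\<in>{..<N}. dist (\<alpha> \<zeta> (x m)) (\<alpha> \<zeta>0 (x m)) < e"
        using early[OF \<zeta>] near by (simp add: dist_norm)
      from bspec[OF this, of n] show ?thesis using True by (simp add: dist_norm)
    qed (use late \<zeta> near e in auto)
  qed (use d1 d2 in auto)
qed

lemma uniformly_continuous_rotations:
  assumes f: "continuous_on (sphere 0 1) f" and e: "e > 0"
  obtains \<delta> where "\<delta> > 0" and "\<And>\<zeta> \<zeta>0 w. cmod \<zeta> = 1 \<Longrightarrow> cmod \<zeta>0 = 1 \<Longrightarrow> cmod w = 1 \<Longrightarrow>
    cmod (\<zeta> - \<zeta>0) < \<delta> \<Longrightarrow> cmod (f (cnj \<zeta> * w) - f (cnj \<zeta>0 * w)) < e"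
proof -
  obtain \<delta> where \<delta>: "\<delta> > 0" and uc: "\<And>x y. x \<in> sphere 0 1 \<Longrightarrow> y \<in> sphere 0 1 \<Longrightarrow>
      dist y x < \<delta> \<Longrightarrow> dist (f y) (f x) < e"
    using compact_uniformly_continuous[OF f compact_sphere] e
    unfolding uniformly_continuous_on_def by metis
  have "cmod (f (cnj \<zeta> * w) - f (cnj \<zeta>0 * w)) < e"
    if "cmod \<zeta> = 1" "cmod \<zeta>0 = 1" "cmod w = 1" "cmod (\<zeta> - \<zeta>0) < \<delta>" for \<zeta> \<zeta>0 w
  proof -
    have "dist (cnj \<zeta> * w) (cnj \<zeta>0 * w) = cmod (\<zeta> - \<zeta>0)"
      using that by (simp add: dist_norm norm_mult complex_cnj_diff[symmetric]
          left_diff_distrib[symmetric] del: complex_cnj_diff)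
    then show ?thesis
      using uc[of "cnj \<zeta>0 * w" "cnj \<zeta> * w"] that by (simp add: norm_mult dist_norm)
  qed
  then show ?thesis using that \<delta> by blast
qed

lemma separable_dense_sequence:
  assumes "separable_space TYPE('a)"
  obtains d :: "nat \<Rightarrow> 'a::metric_space" where "\<And>a r. r > 0 \<Longrightarrow> \<exists>j. dist (d j) a < r"
proof -
  obtain D :: "'a set" where D: "countable D" "closure D = UNIV"
    using assms by (auto simp: separable_space_def)
  then have "D \<noteq> {}" by auto
  then have range: "range (from_nat_into D) = D" using D(1) by simp
  have "\<exists>j. dist (from_nat_into D j) a < r" if r: "r > 0" for a :: 'a and r
  proof -
    have "a \<in> closure D" using D(2) by simp
    then obtain y where "y \<in> D" "dist y a < r" using r unfolding closure_approachable by blast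
    then show ?thesis using range by (metis rangeE)
  qed
  then show ?thesis using that by blast
qed

text \<open>Since $\mathtt{Lt}_\zeta f = f(\bar\zeta\,\cdot)$, the map $f \mapsto f(v)$ is equivariant when
  $\alpha_\zeta(v) = \bar\zeta v$; this is why the unitaries \<open>v n\<close> below are the adjoints of the
  unitaries of the hypothesis.\<close>
locale rokhlin_construction = unital_cstar sc st
  for sc :: "complex \<Rightarrow> 'a::{real_normed_algebra_1,banach} \<Rightarrow> 'a" and st +
  fixes \<alpha> :: "complex \<Rightarrow> 'a \<Rightarrow> 'a" and v :: "nat \<Rightarrow> 'a" and d :: "nat \<Rightarrow> 'a"
  assumes circle_action: "circle_action sc st \<alpha>"
    and unitary_v: "\<And>n. unitary (v n)"
    and v_equivariant: "\<And>n \<zeta>. cmod \<zeta> = 1 \<Longrightarrow> norm (\<alpha> \<zeta> (v n) - sc (cnj \<zeta>) (v n)) \<le> 1 / (real n + 1) ^ 3"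
    and v_central: "\<And>n j. j \<le> n \<Longrightarrow> norm (commutator (v n) (d j)) \<le> 1 / (real n + 1) ^ 3"
    and d_dense: "\<And>a r. r > 0 \<Longrightarrow> \<exists>j. norm (a - d j) < r"
begin

definition rokhlin_map :: "(complex \<Rightarrow> complex) \<Rightarrow> nat \<Rightarrow> 'a" where
  "rokhlin_map f n = laurent_eval (v n) (approximant f n)"

lemma alpha_hom: "cmod \<zeta> = 1 \<Longrightarrow> unital_star_hom (\<alpha> \<zeta>)"
  using circle_action_hom[OF circle_action] by simp

lemma norm_rokhlin_map_le:
  "continuous_on (sphere 0 1) f \<Longrightarrow> norm (rokhlin_map f n) \<le> approx_bound f"
  unfolding rokhlin_map_def by (rule norm_laurent_eval_le[OF unitary_v approx_bound(3)])

lemma bounded_rokhlin_map: "continuous_on (sphere 0 1) f \<Longrightarrow> bounded_seq (rokhlin_map f)"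
  unfolding bounded_seq_def using norm_rokhlin_map_le by blast

lemma null_seq_rokhlin_map_minus_laurent_eval:
  assumes f: "continuous_on (sphere 0 1) f"
    and S: "\<And>n z. cmod z = 1 \<Longrightarrow> cmod (f z - laurent_fun (S n) z) \<le> b n" and b: "b \<longlonglongrightarrow> 0"
  shows "null_seq (\<lambda>n. rokhlin_map f n - laurent_eval (v n) (S n))"
proof (rule null_seq_le)
  show "norm (rokhlin_map f n - laurent_eval (v n) (S n)) \<le> approx_error f n + b n" for n
    unfolding rokhlin_map_def
  proof (rule norm_laurent_eval_diff_le[OF unitary_v])
    fix z :: complex assume z: "cmod z = 1"
    show "cmod (laurent_fun (approximant f n) z - laurent_fun (S n) z) \<le> approx_error f n + b n"
      using norm_triangle_ineq4[of "f z - laurent_fun (S n) z" "f z - laurent_fun (approximant f n) z"]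
        approximant(2)[OF f z, of n] S[OF z, of n] by simp
  qed
  show "(\<lambda>n. approx_error f n + b n) \<longlonglongrightarrow> 0"
    by (rule tendsto_add_zero[OF approx_error_tendsto_0[OF f] b])
qed

lemma rokhlin_map_cong:
  assumes f: "continuous_on (sphere 0 1) f" and g: "continuous_on (sphere 0 1) g"
    and fg: "\<forall>z\<in>sphere 0 1. f z = g z"
  shows "null_seq (\<lambda>n. rokhlin_map f n - rokhlin_map g n)"
  unfolding rokhlin_map_def[of g]
  by (rule null_seq_rokhlin_map_minus_laurent_eval[OF f _ approx_error_tendsto_0[OF g]])
    (use fg approximant(2)[OF g] in auto)

lemma rokhlin_map_add:
  assumes f: "continuous_on (sphere 0 1) f" and g: "continuous_on (sphere 0 1) g"
  shows "null_seq (\<lambda>n. rokhlin_map (\<lambda>z. f z + g z) n - rokhlin_map f n - rokhlin_map g n)"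
proof -
  have "null_seq (\<lambda>n. rokhlin_map (\<lambda>z. f z + g z) n -
      laurent_eval (v n) (laurent_add (approximant f n) (approximant g n)))"
  proof (rule null_seq_rokhlin_map_minus_laurent_eval)
    fix n and z :: complex assume z: "cmod z = 1"
    show "cmod (f z + g z - laurent_fun (laurent_add (approximant f n) (approximant g n)) z)
        \<le> approx_error f n + approx_error g n"
      using norm_triangle_ineq[of "f z - laurent_fun (approximant f n) z" "g z - laurent_fun (approximant g n) z"]
        approximant(2)[OF f z, of n] approximant(2)[OF g z, of n]
      by (simp add: laurent_fun_add_circle[OF z] algebra_simps)
  qed (use f g in \<open>auto intro: continuous_intros tendsto_add_zero approx_error_tendsto_0\<close>)
  then show ?thesis by (simp add: laurent_eval_add[OF unitary_v] rokhlin_map_def diff_diff_eq)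
qed

lemma rokhlin_map_smult:
  assumes f: "continuous_on (sphere 0 1) f"
  shows "null_seq (\<lambda>n. rokhlin_map (\<lambda>z. c * f z) n - sc c (rokhlin_map f n))"
proof -
  have "null_seq (\<lambda>n. rokhlin_map (\<lambda>z. c * f z) n - laurent_eval (v n) (laurent_smult c (approximant f n)))"
  proof (rule null_seq_rokhlin_map_minus_laurent_eval)
    fix n and z :: complex assume z: "cmod z = 1"
    show "cmod (c * f z - laurent_fun (laurent_smult c (approximant f n)) z) \<le> cmod c * approx_error f n"
      using approximant(2)[OF f z, of n]
      by (simp add: laurent_fun_smult right_diff_distrib[symmetric] norm_mult mult_left_mono)
  qed (use f in \<open>auto intro: continuous_intros tendsto_mult_right_zero approx_error_tendsto_0\<close>)
  then show ?thesis by (simp add: laurent_eval_smult rokhlin_map_def)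
qed

lemma rokhlin_map_mult:
  assumes f: "continuous_on (sphere 0 1) f" and g: "continuous_on (sphere 0 1) g"
  shows "null_seq (\<lambda>n. rokhlin_map (\<lambda>z. f z * g z) n - rokhlin_map f n * rokhlin_map g n)"
proof -
  have "null_seq (\<lambda>n. rokhlin_map (\<lambda>z. f z * g z) n -
      laurent_eval (v n) (laurent_mult (approximant f n) (approximant g n)))"
  proof (rule null_seq_rokhlin_map_minus_laurent_eval)
    fix n and z :: complex assume z: "cmod z = 1"
    let ?a = "laurent_fun (approximant f n) z" and ?b = "laurent_fun (approximant g n) z"
    have "f z * g z - ?a * ?b = f z * (g z - ?b) + (f z - ?a) * ?b" by (simp add: algebra_simps)
    then have "cmod (f z * g z - ?a * ?b) \<le> cmod (f z) * cmod (g z - ?b) + cmod (f z - ?a) * cmod ?b"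
      by (metis norm_mult norm_triangle_ineq)
    also have "\<dots> \<le> approx_bound f * approx_error g n + approx_error f n * approx_bound g"
      using approx_bound[OF f] approx_bound[OF g] approximant(2)[OF f z, of n] approximant(2)[OF g z, of n] z
        approx_error_nonneg[OF f]
      by (intro add_mono mult_mono) simp_all
    finally show "cmod (f z * g z - laurent_fun (laurent_mult (approximant f n) (approximant g n)) z)
        \<le> approx_bound f * approx_error g n + approx_error f n * approx_bound g"
      by (simp add: laurent_fun_mult)
  qed (use f g in \<open>auto intro!: continuous_intros tendsto_add_zero tendsto_mult_right_zero
      tendsto_mult_left_zero approx_error_tendsto_0\<close>)
  then show ?thesis by (simp add: laurent_eval_mult[OF unitary_v] rokhlin_map_def)
qed

lemma rokhlin_map_cnj:
  assumes f: "continuous_on (sphere 0 1) f"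
  shows "null_seq (\<lambda>n. rokhlin_map (\<lambda>z. cnj (f z)) n - st (rokhlin_map f n))"
proof -
  have "null_seq (\<lambda>n. rokhlin_map (\<lambda>z. cnj (f z)) n - laurent_eval (v n) (laurent_cnj (approximant f n)))"
  proof (rule null_seq_rokhlin_map_minus_laurent_eval)
    fix n and z :: complex assume z: "cmod z = 1"
    show "cmod (cnj (f z) - laurent_fun (laurent_cnj (approximant f n)) z) \<le> approx_error f n"
      using approximant(2)[OF f z, of n]
      by (simp add: laurent_fun_cnj[OF z] complex_cnj_diff[symmetric] del: complex_cnj_diff)
  qed (use f in \<open>auto intro: continuous_intros approx_error_tendsto_0\<close>)
  then show ?thesis by (simp add: laurent_eval_cnj[OF unitary_v] rokhlin_map_def)
qed

lemma rokhlin_map_one: "null_seq (\<lambda>n. rokhlin_map (\<lambda>z. 1) n - 1)"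
proof -
  have "null_seq (\<lambda>n. rokhlin_map (\<lambda>z. 1) n - laurent_eval (v n) ([:1:], 0))"
    by (rule null_seq_rokhlin_map_minus_laurent_eval[where b="\<lambda>n. 0"]) simp_all
  then show ?thesis by (simp add: poly_eval_const)
qed

lemma norm_commutator_rokhlin_map_le:
  assumes f: "continuous_on (sphere 0 1) f" and j: "j \<le> n"
  shows "norm (commutator (rokhlin_map f n) (d j)) \<le> 6 * approx_bound f / (real n + 1)"
proof -
  have "norm (commutator (rokhlin_map f n) (d j))
      \<le> laurent_lip (approximant f n) * approx_bound f * norm (commutator (v n) (d j))"
    unfolding rokhlin_map_def
    by (rule norm_commutator_laurent_eval_le[OF unitary_v approx_bound(3)[OF f]])
  also have "\<dots> \<le> laurent_lip (approximant f n) * approx_bound f * (1 / (real n + 1) ^ 3)"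
    using laurent_lip_nonneg approx_bound(1)[OF f]
    by (intro mult_left_mono v_central[OF j]) simp
  also have "\<dots> \<le> 6 * approx_bound f / (real n + 1)"
    by (rule weighted_lip_bound[OF f])
  finally show ?thesis .
qed

lemma rokhlin_map_central:
  assumes f: "continuous_on (sphere 0 1) f"
  shows "null_seq (\<lambda>n. rokhlin_map f n * a - a * rokhlin_map f n)"
  unfolding null_seq_def
proof (rule LIMSEQ_I)
  fix r :: real assume r: "r > 0"
  define K where "K = approx_bound f"
  have K: "K \<ge> 0" "\<And>n. norm (rokhlin_map f n) \<le> K"
    using approx_bound(1)[OF f] norm_rokhlin_map_le[OF f] by (simp_all add: K_def)
  obtain j where j: "norm (a - d j) < r / (4 * (K + 1))"
    using d_dense[of "r / (4 * (K + 1))"] r K by auto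
  obtain N where N: "\<And>n. n \<ge> N \<Longrightarrow> 6 * K / (real n + 1) < r / 2"
    using order_tendstoD(2)[OF inverse_succ_tendsto_0[of "6 * K"], of "r / 2"] r
    by (auto simp: eventually_sequentially)
  have "norm (rokhlin_map f n * a - a * rokhlin_map f n - 0) < r" if n: "n \<ge> max j N" for n
  proof -
    let ?x = "rokhlin_map f n" and ?e = "a - d j"
    have "?x * a - a * ?x = commutator ?x (d j) + ?x * ?e - ?e * ?x"
      by (simp add: commutator_def algebra_simps)
    then have "norm (?x * a - a * ?x) \<le> norm (commutator ?x (d j)) + norm (?x * ?e) + norm (?e * ?x)"
      by (simp only: norm_add_diff_le)
    also have "\<dots> \<le> 6 * K / (real n + 1) + K * norm ?e + norm ?e * K"
      using norm_commutator_rokhlin_map_le[OF f, of j n] n K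
      by (intro add_mono order_trans[OF norm_mult_ineq] mult_mono) (simp_all add: K_def)
    also have "\<dots> < r"
    proof -
      have "2 * K * norm ?e \<le> 2 * (K + 1) * (r / (4 * (K + 1)))"
        using j K by (intro mult_mono) auto
      also have "\<dots> = r / 2" using K by (simp add: field_simps)
      finally show ?thesis using N[of n] n by simp
    qed
    finally show ?thesis by simp
  qed
  then show "\<exists>N. \<forall>n\<ge>N. norm (rokhlin_map f n * a - a * rokhlin_map f n - 0) < r" by blast
qed

lemma norm_alpha_rokhlin_map_minus_rotate_le:
  assumes f: "continuous_on (sphere 0 1) f" and \<zeta>: "cmod \<zeta> = 1"
  shows "norm (\<alpha> \<zeta> (rokhlin_map f n) - laurent_eval (v n) (laurent_rotate (cnj \<zeta>) (approximant f n)))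
    \<le> 6 * approx_bound f / (real n + 1)"
proof -
  have c: "cmod (cnj \<zeta>) = 1" using \<zeta> by simp
  have "norm (\<alpha> \<zeta> (rokhlin_map f n) - laurent_eval (v n) (laurent_rotate (cnj \<zeta>) (approximant f n)))
      = norm (laurent_eval (\<alpha> \<zeta> (v n)) (approximant f n) - laurent_eval (sc (cnj \<zeta>) (v n)) (approximant f n))"
    by (simp add: rokhlin_map_def hom_laurent_eval[OF alpha_hom[OF \<zeta>]] laurent_eval_sc[OF c])
  also have "\<dots> \<le> laurent_lip (approximant f n) * approx_bound f * norm (\<alpha> \<zeta> (v n) - sc (cnj \<zeta>) (v n))"
    by (rule norm_laurent_eval_diff_unitaries_le[OF hom_unitary[OF alpha_hom[OF \<zeta>] unitary_v]
          unitary_sc[OF c unitary_v] approx_bound(3)[OF f]])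
  also have "\<dots> \<le> laurent_lip (approximant f n) * approx_bound f * (1 / (real n + 1) ^ 3)"
    using laurent_lip_nonneg approx_bound(1)[OF f]
    by (intro mult_left_mono v_equivariant[OF \<zeta>]) simp
  also have "\<dots> \<le> 6 * approx_bound f / (real n + 1)"
    by (rule weighted_lip_bound[OF f])
  finally show ?thesis .
qed

lemma rokhlin_map_equivariant:
  assumes f: "continuous_on (sphere 0 1) f" and \<zeta>: "cmod \<zeta> = 1"
  shows "null_seq (\<lambda>n. \<alpha> \<zeta> (rokhlin_map f n) - rokhlin_map (\<lambda>z. f (cnj \<zeta> * z)) n)"
proof -
  let ?R = "\<lambda>n. laurent_eval (v n) (laurent_rotate (cnj \<zeta>) (approximant f n))"
  have "null_seq (\<lambda>n. \<alpha> \<zeta> (rokhlin_map f n) - ?R n)"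
    using norm_alpha_rokhlin_map_minus_rotate_le[OF f \<zeta>]
    by (intro null_seq_le[OF _ inverse_succ_tendsto_0])
  moreover have "null_seq (\<lambda>n. rokhlin_map (\<lambda>z. f (cnj \<zeta> * z)) n - ?R n)"
  proof (rule null_seq_rokhlin_map_minus_laurent_eval)
    show "continuous_on (sphere 0 1) (\<lambda>z. f (cnj \<zeta> * z))"
      by (rule continuous_on_compose2[OF f]) (auto intro!: continuous_intros simp: norm_mult \<zeta>)
    fix n and z :: complex assume z: "cmod z = 1"
    show "cmod (f (cnj \<zeta> * z) - laurent_fun (laurent_rotate (cnj \<zeta>) (approximant f n)) z) \<le> approx_error f n"
      using approximant(2)[OF f, of "cnj \<zeta> * z" n] z \<zeta> by (simp add: laurent_fun_rotate norm_mult)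
  qed (rule approx_error_tendsto_0[OF f])
  ultimately show ?thesis
    using null_seq_diff by fastforce
qed

lemma norm_rotated_approximants_diff_le:
  assumes f: "continuous_on (sphere 0 1) f" and \<zeta>: "cmod \<zeta> = 1" "cmod \<zeta>0 = 1"
    and b: "\<And>w. cmod w = 1 \<Longrightarrow> cmod (f (cnj \<zeta> * w) - f (cnj \<zeta>0 * w)) \<le> b"
  shows "norm (laurent_eval (v n) (laurent_rotate (cnj \<zeta>) (approximant f n)) -
      laurent_eval (v n) (laurent_rotate (cnj \<zeta>0) (approximant f n))) \<le> 2 * approx_error f n + b"
proof (rule norm_laurent_eval_diff_le[OF unitary_v])
  fix w :: complex assume w: "cmod w = 1"
  let ?A = "laurent_fun (approximant f n)" and ?p = "cnj \<zeta> * w" and ?q = "cnj \<zeta>0 * w"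
  have pq: "cmod ?p = 1" "cmod ?q = 1" using \<zeta> w by (simp_all add: norm_mult)
  have "?A ?p - ?A ?q = (f ?p - f ?q) + (f ?q - ?A ?q) - (f ?p - ?A ?p)" by simp
  then have "cmod (?A ?p - ?A ?q) \<le> cmod (f ?p - f ?q) + cmod (f ?q - ?A ?q) + cmod (f ?p - ?A ?p)"
    by (simp only: norm_add_diff_le)
  also have "\<dots> \<le> b + approx_error f n + approx_error f n"
    using b[OF w] approximant(2)[OF f pq(1)] approximant(2)[OF f pq(2)] by (intro add_mono) auto
  finally show "cmod (laurent_fun (laurent_rotate (cnj \<zeta>) (approximant f n)) w -
      laurent_fun (laurent_rotate (cnj \<zeta>0) (approximant f n)) w) \<le> 2 * approx_error f n + b"
    using \<zeta> by (simp add: laurent_fun_rotate)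
qed

lemma rokhlin_map_alpha_cont:
  assumes f: "continuous_on (sphere 0 1) f"
  shows "alpha_cont_seq \<alpha> (rokhlin_map f)"
proof (rule alpha_cont_seq_if_eventually_equicontinuous)
  show "continuous_on (sphere 0 1) (\<lambda>\<zeta>. \<alpha> \<zeta> (rokhlin_map f n))" for n
    using circle_action by (simp add: circle_action_def)
  fix \<zeta>0 :: complex and e :: real assume \<zeta>0: "\<zeta>0 \<in> sphere 0 1" and e: "e > 0"
  define K where "K = approx_bound f"
  obtain \<delta> where \<delta>: "\<delta> > 0" and uc: "\<And>\<zeta> w. cmod \<zeta> = 1 \<Longrightarrow> cmod w = 1 \<Longrightarrow>
      cmod (\<zeta> - \<zeta>0) < \<delta> \<Longrightarrow> cmod (f (cnj \<zeta> * w) - f (cnj \<zeta>0 * w)) < e / 2"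
    using uniformly_continuous_rotations[OF f half_gt_zero[OF e]] \<zeta>0 by (metis mem_sphere_0)
  have "(\<lambda>n. 6 * K / (real n + 1) + 6 * K / (real n + 1) + 2 * approx_error f n) \<longlonglongrightarrow> 0"
    by (intro tendsto_add_zero inverse_succ_tendsto_0 tendsto_mult_right_zero approx_error_tendsto_0 f)
  from order_tendstoD(2)[OF this half_gt_zero[OF e]]
  obtain N where N: "\<And>n. n \<ge> N \<Longrightarrow> 6 * K / (real n + 1) + 6 * K / (real n + 1) + 2 * approx_error f n < e / 2"
    unfolding eventually_sequentially by blast
  show "\<exists>d>0. \<exists>N. \<forall>n\<ge>N. \<forall>\<zeta>\<in>sphere 0 1. cmod (\<zeta> - \<zeta>0) < d \<longrightarrow>
      norm (\<alpha> \<zeta> (rokhlin_map f n) - \<alpha> \<zeta>0 (rokhlin_map f n)) \<le> e"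
  proof (intro exI[of _ \<delta>] exI[of _ N] conjI allI impI ballI)
    fix n \<zeta> assume n: "n \<ge> N" and \<zeta>: "\<zeta> \<in> sphere 0 1" and near: "cmod (\<zeta> - \<zeta>0) < \<delta>"
    let ?R = "\<lambda>\<xi>. laurent_eval (v n) (laurent_rotate (cnj \<xi>) (approximant f n))"
    have unit: "cmod \<zeta> = 1" "cmod \<zeta>0 = 1" using \<zeta> \<zeta>0 by simp_all
    have "cmod (f (cnj \<zeta> * w) - f (cnj \<zeta>0 * w)) \<le> e / 2" if "cmod w = 1" for w
      using uc[OF unit(1) that near] by simp
    then have "norm (?R \<zeta> - ?R \<zeta>0) \<le> 2 * approx_error f n + e / 2"
      by (rule norm_rotated_approximants_diff_le[OF f unit])
    moreover have "norm (\<alpha> \<zeta> (rokhlin_map f n) - ?R \<zeta>) \<le> 6 * K / (real n + 1)"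
      and "norm (\<alpha> \<zeta>0 (rokhlin_map f n) - ?R \<zeta>0) \<le> 6 * K / (real n + 1)"
      using norm_alpha_rokhlin_map_minus_rotate_le[OF f] unit by (simp_all add: K_def)
    moreover have "norm (\<alpha> \<zeta> (rokhlin_map f n) - \<alpha> \<zeta>0 (rokhlin_map f n)) \<le>
        norm (\<alpha> \<zeta> (rokhlin_map f n) - ?R \<zeta>) + norm (?R \<zeta> - ?R \<zeta>0) + norm (\<alpha> \<zeta>0 (rokhlin_map f n) - ?R \<zeta>0)"
      using norm_add_diff_le[of "\<alpha> \<zeta> (rokhlin_map f n) - ?R \<zeta>" "?R \<zeta> - ?R \<zeta>0"
          "\<alpha> \<zeta>0 (rokhlin_map f n) - ?R \<zeta>0"] by simp
    ultimately show "norm (\<alpha> \<zeta> (rokhlin_map f n) - \<alpha> \<zeta>0 (rokhlin_map f n)) \<le> e"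
      using N[OF n] by linarith
  qed (rule \<delta>)
qed

theorem rokhlin: "rokhlin_circle sc st \<alpha>"
  unfolding rokhlin_circle_def Let_def
  by (intro exI[of _ rokhlin_map] conjI ballI allI impI)
    (simp_all add: bounded_rokhlin_map rokhlin_map_alpha_cont rokhlin_map_cong rokhlin_map_add
      rokhlin_map_smult rokhlin_map_mult rokhlin_map_cnj rokhlin_map_one rokhlin_map_central
      rokhlin_map_equivariant)

end

context unital_cstar
begin

lemma approx_unitaries_imp_rokhlin:
  assumes ca: "circle_action sc st \<alpha>" and sep: "separable_space TYPE('a)"
    and H: "\<forall>F::'a set. finite F \<longrightarrow> (\<forall>\<epsilon>>0. \<exists>u. unitary u \<and>
        (\<forall>\<zeta>\<in>sphere 0 1. norm (\<alpha> \<zeta> u - sc \<zeta> u) < \<epsilon>) \<and> (\<forall>a\<in>F. norm (a * u - u * a) < \<epsilon>))"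
  shows "rokhlin_circle sc st \<alpha>"
proof -
  obtain d :: "nat \<Rightarrow> 'a" where d: "\<And>a r. r > 0 \<Longrightarrow> \<exists>j. dist (d j) a < r"
    using separable_dense_sequence[OF sep] by blast
  let ?P = "\<lambda>n u. unitary u \<and> (\<forall>\<zeta>\<in>sphere 0 1. norm (\<alpha> \<zeta> u - sc \<zeta> u) < 1 / (real n + 1) ^ 3) \<and>
      (\<forall>a\<in>d ` {..n}. norm (a * u - u * a) < 1 / (real n + 1) ^ 3)"
  have "\<forall>n. \<exists>u. ?P n u"
    by (intro allI H[rule_format]) simp_all
  then obtain u where u_all: "\<forall>n. ?P n (u n)" by (auto dest: choice)
  have u: "unitary (u n)" for n using u_all by blast
  have u_equiv: "norm (\<alpha> \<zeta> (u n) - sc \<zeta> (u n)) < 1 / (real n + 1) ^ 3" if "\<zeta> \<in> sphere 0 1" for n \<zeta>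
    using u_all that by blast
  have u_central: "norm (d j * u n - u n * d j) < 1 / (real n + 1) ^ 3" if "j \<le> n" for n j
    using spec[OF u_all, of n] that by auto
  interpret rokhlin_construction sc st \<alpha> "\<lambda>n. st (u n)" d
  proof
    show "circle_action sc st \<alpha>" by (rule ca)
    show "unitary (st (u n))" for n by (rule unitary_st[OF u])
    show "norm (\<alpha> \<zeta> (st (u n)) - sc (cnj \<zeta>) (st (u n))) \<le> 1 / (real n + 1) ^ 3"
      if "cmod \<zeta> = 1" for n \<zeta>
    proof -
      have "\<alpha> \<zeta> (st (u n)) - sc (cnj \<zeta>) (st (u n)) = st (\<alpha> \<zeta> (u n) - sc \<zeta> (u n))"
        using that by (simp add: hom_st[OF circle_action_hom[OF ca]] st_diff st_sc)
      then show ?thesis using u_equiv[of \<zeta> n] that by simp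
    qed
    show "norm (commutator (st (u n)) (d j)) \<le> 1 / (real n + 1) ^ 3" if "j \<le> n" for n j
      using norm_commutator_st_le[OF u, of n "d j"] u_central[OF that]
      by (simp add: commutator_def norm_minus_commute)
    show "\<exists>j. norm (a - d j) < r" if "r > 0" for a r
      using d[OF that, of a] by (simp add: dist_norm norm_minus_commute)
  qed
  show ?thesis by (rule rokhlin)
qed

end


theorem proposition2p4:
  fixes sc :: "complex \<Rightarrow> 'a::{real_normed_algebra_1,banach} \<Rightarrow> 'a"
    and st :: "'a \<Rightarrow> 'a"
    and \<alpha> :: "complex \<Rightarrow> 'a \<Rightarrow> 'a"
  assumes "cstar_alg sc st"
    and "separable_space TYPE('a)"
    and "circle_action sc st \<alpha>"
  shows "rokhlin_circle sc st \<alpha> \<longleftrightarrow>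
    (\<forall>F::'a set. finite F \<longrightarrow> (\<forall>\<epsilon>>0. \<exists>u. unitary_el st u \<and>
        (\<forall>\<zeta>\<in>sphere 0 1. norm (\<alpha> \<zeta> u - sc \<zeta> u) < \<epsilon>) \<and>
        (\<forall>a\<in>F. norm (a * u - u * a) < \<epsilon>)))"
proof -
  interpret unital_cstar sc st by unfold_locales (rule assms(1))
  show ?thesis
    using rokhlin_imp_approx_unitaries[OF assms(3)] approx_unitaries_imp_rokhlin[OF assms(3,2)]
    by blast
qed

end
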